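(* Let $F$ be an algebraically closed field. Let $\tau=\prod_{p \text{ prime}}p^{k_p}$ be a Steinitz number such that $k_q=\infty$ for some prime $q$. Then for every infinite cardinal $\alpha$ there exists a unital locally matrix algebra $A$ over $F$ with $\dim_F A=\alpha$ and $\mathbf{n}(A)=\tau$.
   Context: A Steinitz number is a formal product $\prod_p p^{k_p}$ over primes with $k_p\in\mathbb{N}\cup\{0,\infty\}$, ordered by divisibility (exponents add with $t+\infty=\infty$). A unital algebra $A$ is locally matrix if every finite subset lies in a subalgebra $B$ with $1_A\in B$ and $B\cong M_n(F)$ for some $n$. $D(A)$ is the set of $n$ for which $A$ has a subalgebra containing $1_A$ isomorphic to $M_n(F)$, and $\mathbf{n}(A)$ is the least common multiple of $D(A)$. *)

theory Defs
  imports "HOL-Computational_Algebra.Computational_Algebra" "Jordan_Normal_Form.Matrix"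
    "HOL-Library.Extended_Nat"
begin

text \<open>A Steinitz number \<open>\<Prod>\<^sub>p p^(k_p)\<close> is represented by its exponent map
  \<open>k :: nat \<Rightarrow> enat\<close> (with \<open>\<infinity>\<close> allowed); the values at non-primes are required to be 0.\<close>

definition steinitz :: "(nat \<Rightarrow> enat) \<Rightarrow> bool" where
  "steinitz k \<longleftrightarrow> (\<forall>p. \<not> prime p \<longrightarrow> k p = 0)"

definition steinitz_lcm :: "nat set \<Rightarrow> (nat \<Rightarrow> enat)" where
  "steinitz_lcm S = (\<lambda>p. if prime p then (SUP n\<in>S. enat (multiplicity p n)) else 0)"

text \<open>An \<open>F\<close>-vector space of dimension \<open>|'b|\<close> is represented in coordinates as the space of
  finitely supported functions \<open>'b \<Rightarrow> F\<close> (basis: the indicator functions of points of \<open>'b\<close>).\<close>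

definition fin_supp :: "('b \<Rightarrow> 'a::zero) set" where
  "fin_supp = {f. finite {x. f x \<noteq> 0}}"

definition unital_algebra ::
  "(('b \<Rightarrow> 'a::field) \<Rightarrow> ('b \<Rightarrow> 'a) \<Rightarrow> ('b \<Rightarrow> 'a)) \<Rightarrow> ('b \<Rightarrow> 'a) \<Rightarrow> bool" where
  "unital_algebra m e \<longleftrightarrow>
     e \<in> fin_supp \<and>
     (\<forall>f\<in>fin_supp. \<forall>g\<in>fin_supp. m f g \<in> fin_supp) \<and>
     (\<forall>f\<in>fin_supp. \<forall>g\<in>fin_supp. \<forall>h\<in>fin_supp.
        m (\<lambda>x. f x + g x) h = (\<lambda>x. m f h x + m g h x) \<and>
        m f (\<lambda>x. g x + h x) = (\<lambda>x. m f g x + m f h x) \<and>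
        m (m f g) h = m f (m g h)) \<and>
     (\<forall>c. \<forall>f\<in>fin_supp. \<forall>g\<in>fin_supp.
        m (\<lambda>x. c * f x) g = (\<lambda>x. c * m f g x) \<and>
        m f (\<lambda>x. c * g x) = (\<lambda>x. c * m f g x)) \<and>
     (\<forall>f\<in>fin_supp. m e f = f \<and> m f e = f)"

text \<open>\<open>matrix_embedding m e n \<phi>\<close>: \<open>\<phi>\<close> is an injective unital \<open>F\<close>-algebra homomorphism from
  \<open>M_n(F)\<close> into the algebra; its image is then a subalgebra containing \<open>1\<close> and isomorphic to
  \<open>M_n(F)\<close>, and every such subalgebra arises this way.\<close>

definition matrix_embedding ::
  "(('b \<Rightarrow> 'a::field) \<Rightarrow> ('b \<Rightarrow> 'a) \<Rightarrow> ('b \<Rightarrow> 'a)) \<Rightarrow> ('b \<Rightarrow> 'a) \<Rightarrow> nat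
     \<Rightarrow> ('a mat \<Rightarrow> ('b \<Rightarrow> 'a)) \<Rightarrow> bool" where
  "matrix_embedding m e n \<phi> \<longleftrightarrow>
     (\<forall>M\<in>carrier_mat n n. \<phi> M \<in> fin_supp) \<and>
     inj_on \<phi> (carrier_mat n n) \<and>
     (\<forall>M\<in>carrier_mat n n. \<forall>N\<in>carrier_mat n n.
        \<phi> (M + N) = (\<lambda>x. \<phi> M x + \<phi> N x) \<and> \<phi> (M * N) = m (\<phi> M) (\<phi> N)) \<and>
     (\<forall>c. \<forall>M\<in>carrier_mat n n. \<phi> (c \<cdot>\<^sub>m M) = (\<lambda>x. c * \<phi> M x)) \<and>
     \<phi> (1\<^sub>m n) = e"

definition locally_matrix ::
  "(('b \<Rightarrow> 'a::field) \<Rightarrow> ('b \<Rightarrow> 'a) \<Rightarrow> ('b \<Rightarrow> 'a)) \<Rightarrow> ('b \<Rightarrow> 'a) \<Rightarrow> bool" where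
  "locally_matrix m e \<longleftrightarrow>
     (\<forall>S. finite S \<and> S \<subseteq> fin_supp \<longrightarrow>
        (\<exists>n \<phi>. n > 0 \<and> matrix_embedding m e n \<phi> \<and> S \<subseteq> \<phi> ` carrier_mat n n))"

definition matrix_degrees ::
  "(('b \<Rightarrow> 'a::field) \<Rightarrow> ('b \<Rightarrow> 'a) \<Rightarrow> ('b \<Rightarrow> 'a)) \<Rightarrow> ('b \<Rightarrow> 'a) \<Rightarrow> nat set" where
  "matrix_degrees m e = {n. n > 0 \<and> (\<exists>\<phi>. matrix_embedding m e n \<phi>)}"

definition steinitz_char ::
  "(('b \<Rightarrow> 'a::field) \<Rightarrow> ('b \<Rightarrow> 'a) \<Rightarrow> ('b \<Rightarrow> 'a)) \<Rightarrow> ('b \<Rightarrow> 'a) \<Rightarrow> (nat \<Rightarrow> enat)" where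
  "steinitz_char m e = steinitz_lcm (matrix_degrees m e)"

end

theory Submission
  imports Defs "HOL-Library.Function_Algebras" "HOL-Algebra.Free_Abelian_Groups"
begin

text \<open>The algebra is the infinite tensor product \<open>\<Otimes>\<^bsub>i \<in> I\<^esub> M\<^bsub>d i\<^esub>(F)\<close> of matrix algebras of
  prime sizes \<open>d i\<close>, realised concretely by the operators \<open>T \<otimes> id\<close> on the space spanned by the
  finitely supported words \<open>(w\<^sub>i)\<^sub>i\<close>, \<open>w\<^sub>i < d i\<close>, where \<open>T\<close> acts on the coordinates in a finite set
  \<open>J\<close> only.  These operators form a copy of \<open>M\<^bsub>N\<^esub>(F)\<close> with \<open>N = \<Prod>\<^bsub>i \<in> J\<^esub> d i\<close>, so the algebra is
  locally matrix and every such \<open>N\<close> is a degree; a product basis indexed by finitely supported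
  labels shows that the dimension is \<open>|I|\<close>.  Conversely, a unital copy of \<open>M\<^bsub>n\<^esub>(F)\<close> lies in
  some \<open>M\<^bsub>N\<^esub>(F)\<close> and makes \<open>F\<^bsup>N\<^esup>\<close> an \<open>M\<^bsub>n\<^esub>(F)\<close>-module, so \<open>n\<close> divides \<open>N\<close>.  Hence the exponent of
  \<open>p\<close> in \<open>\<nat>(A)\<close> is the number of indices with \<open>d i = p\<close>, and it remains to label an index set of
  cardinality \<open>\<alpha>\<close> by primes with these multiplicities, the prime \<open>q\<close> with \<open>k\<^sub>q = \<infinity>\<close> taking
  all remaining indices.\<close>

lemma sum_fun_apply: "(\<Sum>a\<in>A. f a) x = (\<Sum>a\<in>A. f a x)"
  by (induction A rule: infinite_finite_induct) auto

definition supported_on :: "'x set \<Rightarrow> ('x \<Rightarrow> 'a::zero) set" where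
  "supported_on X = {g. \<forall>x. x \<notin> X \<longrightarrow> g x = 0}"

definition fun_scale :: "'a::times \<Rightarrow> ('x \<Rightarrow> 'a) \<Rightarrow> ('x \<Rightarrow> 'a)" where
  "fun_scale c g = (\<lambda>x. c * g x)"

section \<open>Transport of an algebra structure\<close>

lemma fin_supp_add:
  fixes f g :: "'b \<Rightarrow> 'a::comm_monoid_add"
  assumes "f \<in> fin_supp" "g \<in> fin_supp"
  shows "(\<lambda>x. f x + g x) \<in> fin_supp"
proof -
  have "{x. f x + g x \<noteq> 0} \<subseteq> {x. f x \<noteq> 0} \<union> {x. g x \<noteq> 0}" by auto
  with assms show ?thesis
    unfolding fin_supp_def using finite_subset by blast
qed

lemma fin_supp_scale:
  fixes f :: "'b \<Rightarrow> 'a::field"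
  assumes "f \<in> fin_supp"
  shows "(\<lambda>x. c * f x) \<in> fin_supp"
proof -
  have "{x. c * f x \<noteq> 0} \<subseteq> {x. f x \<noteq> 0}" by auto
  with assms show ?thesis
    unfolding fin_supp_def using finite_subset by blast
qed

locale algebra_transport =
  fixes Psi :: "('b \<Rightarrow> 'a::field) \<Rightarrow> 'e" and S :: "'e set"
    and add :: "'e \<Rightarrow> 'e \<Rightarrow> 'e" and smult :: "'a \<Rightarrow> 'e \<Rightarrow> 'e" and mult :: "'e \<Rightarrow> 'e \<Rightarrow> 'e" and one :: 'e
  assumes bij: "bij_betw Psi fin_supp S"
    and Psi_add: "\<And>f g. f \<in> fin_supp \<Longrightarrow> g \<in> fin_supp \<Longrightarrow> Psi (\<lambda>x. f x + g x) = add (Psi f) (Psi g)"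
    and Psi_smult: "\<And>c f. f \<in> fin_supp \<Longrightarrow> Psi (\<lambda>x. c * f x) = smult c (Psi f)"
    and mult_closed: "\<And>a b. a \<in> S \<Longrightarrow> b \<in> S \<Longrightarrow> mult a b \<in> S"
    and one_in: "one \<in> S"
    and add_mult: "\<And>a b c. a \<in> S \<Longrightarrow> b \<in> S \<Longrightarrow> c \<in> S \<Longrightarrow> mult (add a b) c = add (mult a c) (mult b c)"
    and mult_add: "\<And>a b c. a \<in> S \<Longrightarrow> b \<in> S \<Longrightarrow> c \<in> S \<Longrightarrow> mult a (add b c) = add (mult a b) (mult a c)"
    and mult_assoc: "\<And>a b c. a \<in> S \<Longrightarrow> b \<in> S \<Longrightarrow> c \<in> S \<Longrightarrow> mult (mult a b) c = mult a (mult b c)"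
    and smult_mult: "\<And>k a b. a \<in> S \<Longrightarrow> b \<in> S \<Longrightarrow> mult (smult k a) b = smult k (mult a b)"
    and mult_smult: "\<And>k a b. a \<in> S \<Longrightarrow> b \<in> S \<Longrightarrow> mult a (smult k b) = smult k (mult a b)"
    and one_mult: "\<And>a. a \<in> S \<Longrightarrow> mult one a = a"
    and mult_one: "\<And>a. a \<in> S \<Longrightarrow> mult a one = a"
begin

definition pull :: "'e \<Rightarrow> ('b \<Rightarrow> 'a)" where
  "pull = inv_into fin_supp Psi"

definition pulled_mult :: "('b \<Rightarrow> 'a) \<Rightarrow> ('b \<Rightarrow> 'a) \<Rightarrow> ('b \<Rightarrow> 'a)" where
  "pulled_mult f g = pull (mult (Psi f) (Psi g))"

definition pulled_one :: "'b \<Rightarrow> 'a" where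
  "pulled_one = pull one"

lemma pull_in: "a \<in> S \<Longrightarrow> pull a \<in> fin_supp"
  unfolding pull_def using bij by (metis bij_betw_def inv_into_into)

lemma Psi_pull: "a \<in> S \<Longrightarrow> Psi (pull a) = a"
  unfolding pull_def using bij by (metis bij_betw_inv_into_right)

lemma Psi_in: "f \<in> fin_supp \<Longrightarrow> Psi f \<in> S"
  using bij by (metis bij_betwE)

lemma Psi_inject: "f \<in> fin_supp \<Longrightarrow> g \<in> fin_supp \<Longrightarrow> Psi f = Psi g \<Longrightarrow> f = g"
  using bij by (metis bij_betw_imp_inj_on inj_onD)

lemma pulled_mult_in: "f \<in> fin_supp \<Longrightarrow> g \<in> fin_supp \<Longrightarrow> pulled_mult f g \<in> fin_supp"
  unfolding pulled_mult_def by (intro pull_in mult_closed Psi_in)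

lemma Psi_pulled_mult: "f \<in> fin_supp \<Longrightarrow> g \<in> fin_supp \<Longrightarrow> Psi (pulled_mult f g) = mult (Psi f) (Psi g)"
  unfolding pulled_mult_def by (intro Psi_pull mult_closed Psi_in)

lemma pulled_one_in: "pulled_one \<in> fin_supp" and Psi_pulled_one: "Psi pulled_one = one"
  unfolding pulled_one_def using pull_in Psi_pull one_in by auto

lemmas transport_simps = Psi_add Psi_smult Psi_pulled_mult Psi_pulled_one Psi_in
  fin_supp_add fin_supp_scale pulled_mult_in pulled_one_in

lemma unital_algebra_pulled: "unital_algebra pulled_mult pulled_one"
  unfolding unital_algebra_def
proof (intro conjI ballI allI)
  fix f g h :: "'b \<Rightarrow> 'a" assume fgh: "f \<in> fin_supp" "g \<in> fin_supp" "h \<in> fin_supp"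
  show "pulled_mult (\<lambda>x. f x + g x) h = (\<lambda>x. pulled_mult f h x + pulled_mult g h x)"
    by (rule Psi_inject) (simp_all add: fgh transport_simps add_mult)
  show "pulled_mult f (\<lambda>x. g x + h x) = (\<lambda>x. pulled_mult f g x + pulled_mult f h x)"
    by (rule Psi_inject) (simp_all add: fgh transport_simps mult_add)
  show "pulled_mult (pulled_mult f g) h = pulled_mult f (pulled_mult g h)"
    by (rule Psi_inject) (simp_all add: fgh transport_simps mult_assoc)
next
  fix c and f g :: "'b \<Rightarrow> 'a" assume fg: "f \<in> fin_supp" "g \<in> fin_supp"
  show "pulled_mult (\<lambda>x. c * f x) g = (\<lambda>x. c * pulled_mult f g x)"
    by (rule Psi_inject) (simp_all add: fg transport_simps smult_mult)
  show "pulled_mult f (\<lambda>x. c * g x) = (\<lambda>x. c * pulled_mult f g x)"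
    by (rule Psi_inject) (simp_all add: fg transport_simps mult_smult)
next
  fix f :: "'b \<Rightarrow> 'a" assume f: "f \<in> fin_supp"
  show "pulled_mult pulled_one f = f" "pulled_mult f pulled_one = f"
    by (rule Psi_inject; simp add: f transport_simps one_mult mult_one)+
qed (simp_all add: pulled_one_in pulled_mult_in)

lemma matrix_embedding_pullI:
  fixes psi :: "'a mat \<Rightarrow> 'e"
  assumes psi_in: "\<And>M. M \<in> carrier_mat n n \<Longrightarrow> psi M \<in> S"
    and inj: "inj_on psi (carrier_mat n n)"
    and psi_add: "\<And>M N. M \<in> carrier_mat n n \<Longrightarrow> N \<in> carrier_mat n n \<Longrightarrow> psi (M + N) = add (psi M) (psi N)"
    and psi_mult: "\<And>M N. M \<in> carrier_mat n n \<Longrightarrow> N \<in> carrier_mat n n \<Longrightarrow> psi (M * N) = mult (psi M) (psi N)"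
    and psi_smult: "\<And>c M. M \<in> carrier_mat n n \<Longrightarrow> psi (c \<cdot>\<^sub>m M) = smult c (psi M)"
    and psi_one: "psi (1\<^sub>m n) = one"
  shows "matrix_embedding pulled_mult pulled_one n (\<lambda>M. pull (psi M))"
  unfolding matrix_embedding_def
proof (intro conjI ballI allI)
  show "inj_on (\<lambda>M. pull (psi M)) (carrier_mat n n)"
    using inj by (auto simp: inj_on_def dest: arg_cong[of _ _ Psi] simp: Psi_pull psi_in)
next
  fix M N :: "'a mat" assume M: "M \<in> carrier_mat n n" and N: "N \<in> carrier_mat n n"
  have MN: "M + N \<in> carrier_mat n n" using M N by simp
  show "pull (psi (M + N)) = (\<lambda>x. pull (psi M) x + pull (psi N) x)"
    by (rule Psi_inject) (simp_all add: M N MN psi_in pull_in Psi_pull transport_simps, simp add: psi_add M N)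
  show "pull (psi (M * N)) = pulled_mult (pull (psi M)) (pull (psi N))"
    by (simp add: pulled_mult_def M N psi_in Psi_pull psi_mult)
next
  fix c and M :: "'a mat" assume M: "M \<in> carrier_mat n n"
  have cM: "c \<cdot>\<^sub>m M \<in> carrier_mat n n" using M by simp
  show "pull (psi (c \<cdot>\<^sub>m M)) = (\<lambda>x. c * pull (psi M) x)"
    by (rule Psi_inject) (simp_all add: M cM psi_in pull_in Psi_pull transport_simps, simp add: psi_smult M)
qed (simp_all add: pull_in psi_in psi_one pulled_one_def)

lemma matrix_embedding_pushD:
  assumes "matrix_embedding pulled_mult pulled_one n phi"
  shows "\<And>M. M \<in> carrier_mat n n \<Longrightarrow> Psi (phi M) \<in> S"
    and "\<And>M N. M \<in> carrier_mat n n \<Longrightarrow> N \<in> carrier_mat n n \<Longrightarrow>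
           Psi (phi (M + N)) = add (Psi (phi M)) (Psi (phi N))"
    and "\<And>M N. M \<in> carrier_mat n n \<Longrightarrow> N \<in> carrier_mat n n \<Longrightarrow>
           Psi (phi (M * N)) = mult (Psi (phi M)) (Psi (phi N))"
    and "Psi (phi (1\<^sub>m n)) = one"
  using assms by (simp_all add: matrix_embedding_def transport_simps)

end

section \<open>Modules over a full matrix algebra\<close>

locale matrix_unit_action =
  fixes n :: nat and X :: "'x set" and E :: "nat \<Rightarrow> nat \<Rightarrow> ('x \<Rightarrow> 'a::field) \<Rightarrow> ('x \<Rightarrow> 'a)"
  assumes finite_X: "finite X" and n_pos: "0 < n"
    and E_add: "\<And>i j g h. E i j (g + h) = E i j g + E i j h"
    and E_scale: "\<And>i j c g. E i j (fun_scale c g) = fun_scale c (E i j g)"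
    and E_closed: "\<And>i j g. i < n \<Longrightarrow> j < n \<Longrightarrow> g \<in> supported_on X \<Longrightarrow> E i j g \<in> supported_on X"
    and E_mult: "\<And>i j k l g. i < n \<Longrightarrow> j < n \<Longrightarrow> k < n \<Longrightarrow> l < n \<Longrightarrow> g \<in> supported_on X \<Longrightarrow>
      E i j (E k l g) = (if j = k then E i l g else 0)"
    and E_sum: "\<And>g. g \<in> supported_on X \<Longrightarrow> (\<Sum>i<n. E i i g) = g"

sublocale matrix_unit_action \<subseteq> V: vector_space "fun_scale :: 'a \<Rightarrow> ('x \<Rightarrow> 'a) \<Rightarrow> _"
  by unfold_locales (simp_all add: fun_scale_def fun_eq_iff algebra_simps)

context matrix_unit_action
begin

lemma E_zero: "E i j 0 = 0"
  using E_scale[of i j 0 0] by (simp add: fun_scale_def zero_fun_def)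

lemma E_lincomb: "E i j (\<Sum>p\<in>P. fun_scale (u p) (f p)) = (\<Sum>p\<in>P. fun_scale (u p) (E i j (f p)))"
proof (induction P rule: infinite_finite_induct)
  case (insert q Q)
  then show ?case
    by (simp only: sum.insert[OF insert.hyps] E_add E_scale)
qed (simp_all only: sum.infinite sum.empty E_zero not_False_eq_True)

definition point_basis :: "('x \<Rightarrow> 'a) set" where
  "point_basis = (\<lambda>x y. if y = x then 1 else 0) ` X"

lemma inj_on_point_basis: "inj_on (\<lambda>x y. if y = x then 1 else 0 :: 'a) X"
proof (rule inj_onI)
  fix x x' assume "(\<lambda>y. if y = x then 1 else 0 :: 'a) = (\<lambda>y. if y = x' then 1 else 0)"
  from fun_cong[OF this, of x] show "x = x'" by (simp split: if_splits)
qed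

lemma finite_point_basis: "finite point_basis"
  using finite_X by (simp add: point_basis_def)

lemma span_point_basis: "supported_on X \<subseteq> V.span point_basis"
proof
  fix g :: "'x \<Rightarrow> 'a" assume g: "g \<in> supported_on X"
  have "g = (\<Sum>x\<in>X. fun_scale (g x) (\<lambda>y. if y = x then 1 else 0))"
    using g finite_X by (auto simp: fun_eq_iff sum_fun_apply supported_on_def fun_scale_def if_distrib
        cong: if_cong)
  also have "\<dots> \<in> V.span point_basis"
    by (intro V.span_sum V.span_scale V.span_base) (simp add: point_basis_def)
  finally show "g \<in> V.span point_basis" .
qed

lemma point_basis_subset: "point_basis \<subseteq> supported_on X"
  by (auto simp: supported_on_def point_basis_def)

lemma card_point_basis: "card point_basis = card X"
  unfolding point_basis_def by (rule card_image[OF inj_on_point_basis])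

lemma independent_point_basis: "V.independent point_basis"
proof (rule V.independent_if_scalars_zero[OF finite_point_basis])
  fix u and v :: "'x \<Rightarrow> 'a"
  assume sum0: "(\<Sum>v\<in>point_basis. fun_scale (u v) v) = 0" and v: "v \<in> point_basis"
  then obtain x where x: "x \<in> X" "v = (\<lambda>y. if y = x then 1 else 0)" by (auto simp: point_basis_def)
  have "0 = (\<Sum>z\<in>X. u (\<lambda>y. if y = z then 1 else 0) * (if x = z then 1 else 0))"
    using fun_cong[OF sum0, of x]
    by (simp add: sum_fun_apply point_basis_def sum.reindex[OF inj_on_point_basis] fun_scale_def)
  also have "\<dots> = u v"
    using finite_X x by (simp add: if_distrib cong: if_cong)
  finally show "u v = 0" by simp
qed

text \<open>The images of a basis of the corner \<open>E 0 0 F\<^bsup>X\<^esup>\<close> under the maps \<open>E i 0\<close> form a basis of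
  \<open>F\<^bsup>X\<^esup>\<close>; hence \<open>|X| = n \<cdot> dim (E 0 0 F\<^bsup>X\<^esup>)\<close>.\<close>

definition corner :: "('x \<Rightarrow> 'a) set" where
  "corner = E 0 0 ` supported_on X"

lemma corner_subset: "corner \<subseteq> supported_on X"
  unfolding corner_def using E_closed[of 0 0] n_pos by blast

lemma E_0_j_in_corner:
  assumes "j < n" "g \<in> supported_on X"
  shows "E 0 j g \<in> corner"
  unfolding corner_def
proof (rule image_eqI)
  show "E 0 j g = E 0 0 (E 0 j g)" using E_mult[of 0 0 0 j g] assms n_pos by simp
  show "E 0 j g \<in> supported_on X" using E_closed[of 0 j g] assms n_pos by simp
qed

lemma E_0_j_E_i_0:
  assumes "b \<in> corner" "i < n" "j < n"
  shows "E 0 j (E i 0 b) = (if i = j then b else 0)"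
proof -
  obtain g where g: "g \<in> supported_on X" "b = E 0 0 g" using assms(1) by (auto simp: corner_def)
  have "E 0 j (E i 0 b) = (if i = j then E 0 0 b else 0)"
    using E_mult[of 0 j i 0 b] E_closed[of 0 0 g] g assms n_pos by simp
  moreover have "E 0 0 b = b"
    using E_mult[of 0 0 0 0 g] g n_pos by simp
  ultimately show ?thesis by simp
qed

definition spread :: "('x \<Rightarrow> 'a) set \<Rightarrow> ('x \<Rightarrow> 'a) set" where
  "spread B = (\<lambda>(i, b). E i 0 b) ` ({..<n} \<times> B)"

context
  fixes B :: "('x \<Rightarrow> 'a) set"
  assumes B_corner: "B \<subseteq> corner" and independent_B: "V.independent B" and span_B: "corner \<subseteq> V.span B"
begin

lemma finite_B: "finite B"
  using V.independent_span_bound[OF finite_point_basis independent_B] B_corner corner_subset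
    span_point_basis by blast

lemma inj_on_spread: "inj_on (\<lambda>(i, b). E i 0 b) ({..<n} \<times> B)"
proof (rule inj_onI)
  fix p q assume p: "p \<in> {..<n} \<times> B" and q: "q \<in> {..<n} \<times> B"
    and eq: "(\<lambda>(i, b). E i 0 b) p = (\<lambda>(i, b). E i 0 b) q"
  obtain i b j c where pq: "p = (i, b)" "q = (j, c)" by (cases p, cases q)
  have ib: "i < n" "b \<in> B" and jc: "j < n" "c \<in> B" using p q pq by auto
  have "E 0 i (E i 0 b) = b" "E 0 i (E j 0 c) = (if j = i then c else 0)"
    using E_0_j_E_i_0 B_corner ib jc by auto
  with eq pq have "b = (if j = i then c else 0)"
    by simp
  moreover have "0 \<notin> B"
    using V.dependent_zero independent_B by blast
  ultimately show "p = q"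
    using ib pq by (cases "j = i") auto
qed

lemma card_spread: "card (spread B) = n * card B"
  unfolding spread_def card_image[OF inj_on_spread] by (simp add: card_cartesian_product)

lemma finite_spread: "finite (spread B)"
  using finite_B by (simp add: spread_def)

lemma spread_subset: "spread B \<subseteq> supported_on X"
proof
  fix t assume "t \<in> spread B"
  then obtain i b where "i < n" "b \<in> B" "t = E i 0 b" by (auto simp: spread_def)
  then show "t \<in> supported_on X"
    using E_closed[of i 0 b] B_corner corner_subset n_pos by blast
qed

lemma independent_spread: "V.independent (spread B)"
proof (rule V.independent_if_scalars_zero[OF finite_spread])
  fix u and t :: "'x \<Rightarrow> 'a"
  assume sum0: "(\<Sum>t\<in>spread B. fun_scale (u t) t) = 0" and t: "t \<in> spread B"
  then obtain j b where jb: "j < n" "b \<in> B" "t = E j 0 b"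
    by (auto simp: spread_def)
  \<comment> \<open>applying \<open>E 0 j\<close> isolates the \<open>j\<close>-th block of the relation\<close>
  have "0 = E 0 j (\<Sum>t\<in>spread B. fun_scale (u t) t)"
    using sum0 E_zero by simp
  also have "\<dots> = (\<Sum>p\<in>{..<n} \<times> B. fun_scale (u (E (fst p) 0 (snd p))) (E 0 j (E (fst p) 0 (snd p))))"
    unfolding spread_def sum.reindex[OF inj_on_spread] by (simp add: case_prod_beta E_lincomb)
  also have "\<dots> = (\<Sum>p\<in>{j} \<times> B. fun_scale (u (E j 0 (snd p))) (snd p))"
    using finite_B jb(1) B_corner
    by (intro sum.mono_neutral_cong_right) (auto simp: E_0_j_E_i_0 subset_iff fun_scale_def)
  also have "\<dots> = (\<Sum>c\<in>B. fun_scale (u (E j 0 c)) c)"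
    by (rule sum.reindex_bij_witness[of _ "Pair j" snd]) auto
  finally have "(\<Sum>c\<in>B. fun_scale (u (E j 0 c)) c) = 0" by simp
  then have "u (E j 0 b) = 0"
    by (rule V.independentD[OF independent_B finite_B subset_refl _ jb(2)])
  then show "u t = 0"
    using jb(3) by simp
qed

lemma span_spread: "supported_on X \<subseteq> V.span (spread B)"
proof
  fix g :: "'x \<Rightarrow> 'a" assume g: "g \<in> supported_on X"
  have "E i i g \<in> V.span (spread B)" if i: "i < n" for i
  proof -
    have "E 0 i g \<in> V.span B"
      using E_0_j_in_corner[OF i g] span_B by blast
    then obtain u where u: "E 0 i g = (\<Sum>b\<in>B. fun_scale (u b) b)"
      using V.span_finite[OF finite_B] by auto
    have "E i i g = E i 0 (E 0 i g)"
      using E_mult[of i 0 0 i g] g i n_pos by simp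
    also have "\<dots> = (\<Sum>b\<in>B. fun_scale (u b) (E i 0 b))"
      unfolding u E_lincomb ..
    also have "\<dots> \<in> V.span (spread B)"
      using i by (intro V.span_sum V.span_scale V.span_base) (auto simp: spread_def)
    finally show ?thesis .
  qed
  then have "(\<Sum>i<n. E i i g) \<in> V.span (spread B)"
    by (intro V.span_sum) simp
  then show "g \<in> V.span (spread B)"
    using E_sum[OF g] by simp
qed

lemma card_eq_mult_card_corner_basis: "card X = n * card B"
proof -
  have "card (spread B) \<le> card point_basis"
    using V.independent_span_bound[OF finite_point_basis independent_spread]
      spread_subset span_point_basis by blast
  moreover have "card point_basis \<le> card (spread B)"
    using V.independent_span_bound[OF finite_spread independent_point_basis]
      point_basis_subset span_spread by blast
  ultimately show ?thesis
    by (simp add: card_point_basis card_spread)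
qed

end

theorem dvd_card: "n dvd card X"
proof -
  obtain B where "B \<subseteq> corner" "V.independent B" "corner \<subseteq> V.span B"
    using V.maximal_independent_subset[of corner] by blast
  then show ?thesis
    using card_eq_mult_card_corner_basis by simp
qed

end

section \<open>Local operators on an infinite tensor product\<close>

definition agree_off :: "'i set \<Rightarrow> ('i \<Rightarrow> 'x) \<Rightarrow> ('i \<Rightarrow> 'x) \<Rightarrow> bool" where
  "agree_off J w v \<longleftrightarrow> (\<forall>i. i \<notin> J \<longrightarrow> w i = v i)"

lemma agree_off_refl [simp]: "agree_off J w w"
  by (simp add: agree_off_def)

lemma agree_off_sym: "agree_off J w v \<Longrightarrow> agree_off J v w"
  by (simp add: agree_off_def)

lemma agree_off_trans: "agree_off J w v \<Longrightarrow> agree_off J v x \<Longrightarrow> agree_off J w x"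
  by (simp add: agree_off_def)

lemma agree_off_mono: "agree_off J w v \<Longrightarrow> J \<subseteq> K \<Longrightarrow> agree_off K w v"
  by (auto simp add: agree_off_def)

lemma agree_off_override_on [simp]: "agree_off J x (override_on x v J)"
  by (simp add: agree_off_def)

lemma agree_off_empty: "agree_off {} w v \<longleftrightarrow> w = v"
  by (auto simp: agree_off_def)

text \<open>The words of the tensor product \<open>\<Otimes>\<^sub>i F\<^bsup>d i\<^esup>\<close> of the spaces with bases \<open>{..<d i}\<close>: basis
  tensors are the sequences of digits that are almost everywhere \<open>0\<close>.  An element of
  \<open>\<Otimes>\<^sub>i M\<^bsub>d i\<^esub>(F)\<close> acts on this space; we represent it by its kernel (matrix) on pairs of words.\<close>

locale tensor_words =
  fixes d :: "'i \<Rightarrow> nat"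
  assumes dim_pos: "0 < d i"
begin

definition words :: "('i \<Rightarrow> nat) set" where
  "words = {w. finite {i. w i \<noteq> 0} \<and> (\<forall>i. w i < d i)}"

definition fibre :: "'i set \<Rightarrow> ('i \<Rightarrow> nat) \<Rightarrow> ('i \<Rightarrow> nat) set" where
  "fibre J w = {v \<in> words. agree_off J w v}"

definition local_words :: "'i set \<Rightarrow> ('i \<Rightarrow> nat) set" where
  "local_words J = PiE J (\<lambda>i. {..<d i})"

lemma zero_in_words: "(\<lambda>_. 0) \<in> words"
  using dim_pos by (simp add: words_def)

lemma restrict_in_local_words: "w \<in> words \<Longrightarrow> restrict w J \<in> local_words J"
  by (auto simp: words_def local_words_def)

lemma override_on_in_words:
  assumes "finite J" "x \<in> words" "\<forall>i\<in>J. v i < d i"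
  shows "override_on x v J \<in> words"
proof -
  have "{i. override_on x v J i \<noteq> 0} \<subseteq> J \<union> {i. x i \<noteq> 0}"
    by (auto simp: override_on_def)
  moreover have "finite (J \<union> {i. x i \<noteq> 0})"
    using assms by (simp add: words_def)
  ultimately have "finite {i. override_on x v J i \<noteq> 0}"
    by (rule finite_subset)
  moreover have "\<forall>i. override_on x v J i < d i"
    using assms by (auto simp: words_def override_on_def)
  ultimately show ?thesis
    by (simp add: words_def)
qed

lemma finite_local_words: "finite J \<Longrightarrow> finite (local_words J)"
  by (simp add: local_words_def finite_PiE)

lemma card_local_words: "finite J \<Longrightarrow> card (local_words J) = (\<Prod>i\<in>J. d i)"
  by (simp add: local_words_def card_PiE)

lemma card_local_words_pos: "finite J \<Longrightarrow> 0 < card (local_words J)"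
  using dim_pos by (simp add: card_local_words prod_pos)

lemma fibre_eq:
  assumes "v \<in> fibre J w"
  shows "fibre J v = fibre J w"
proof -
  have "agree_off J w v" using assms by (simp add: fibre_def)
  then have "agree_off J v x \<longleftrightarrow> agree_off J w x" for x
    using agree_off_trans agree_off_sym by metis
  then show ?thesis by (simp add: fibre_def)
qed

lemma bij_betw_restrict_fibre:
  assumes "finite J" "w \<in> words"
  shows "bij_betw (\<lambda>v. restrict v J) (fibre J w) (local_words J)"
proof (rule bij_betw_byWitness[where f' = "\<lambda>x. override_on w x J"])
  show "\<forall>v\<in>fibre J w. override_on w (restrict v J) J = v"
    by (auto simp: fibre_def override_on_def agree_off_def fun_eq_iff)
  show "\<forall>x\<in>local_words J. restrict (override_on w x J) J = x"
    by (auto simp: local_words_def override_on_def fun_eq_iff PiE_def extensional_def)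
  show "(\<lambda>v. restrict v J) ` fibre J w \<subseteq> local_words J"
    by (auto simp: fibre_def intro: restrict_in_local_words)
  show "(\<lambda>x. override_on w x J) ` local_words J \<subseteq> fibre J w"
    using override_on_in_words[OF assms] by (auto simp: fibre_def local_words_def)
qed

lemma bij_betw_override_on_fibre:
  assumes "finite J" "w \<in> words" "x \<in> words"
  shows "bij_betw (\<lambda>v. override_on x v J) (fibre J w) (fibre J x)"
proof (rule bij_betw_byWitness[where f' = "\<lambda>v. override_on w v J"])
  show "\<forall>v\<in>fibre J w. override_on w (override_on x v J) J = v"
    by (auto simp: fibre_def override_on_def agree_off_def fun_eq_iff)
  show "\<forall>v\<in>fibre J x. override_on x (override_on w v J) J = v"
    by (auto simp: fibre_def override_on_def agree_off_def fun_eq_iff)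
  show "(\<lambda>v. override_on x v J) ` fibre J w \<subseteq> fibre J x"
    using override_on_in_words[OF assms(1,3)] by (auto simp: fibre_def words_def)
  show "(\<lambda>v. override_on w v J) ` fibre J x \<subseteq> fibre J w"
    using override_on_in_words[OF assms(1,2)] by (auto simp: fibre_def words_def)
qed

lemma finite_fibre:
  assumes "finite J"
  shows "finite (fibre J w)"
proof (cases "fibre J w = {}")
  case False
  then obtain x where x: "x \<in> fibre J w" by auto
  then have "x \<in> words" by (simp add: fibre_def)
  then show ?thesis
    using fibre_eq[OF x] bij_betw_finite bij_betw_restrict_fibre[OF assms] finite_local_words[OF assms]
    by metis
qed simp

lemma card_fibre: "finite J \<Longrightarrow> w \<in> words \<Longrightarrow> card (fibre J w) = card (local_words J)"
  using bij_betw_restrict_fibre bij_betw_same_card by metis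

text \<open>\<open>local_kernel J a\<close>: \<open>a\<close> is the kernel of an operator \<open>T \<otimes> id\<close>, where \<open>T\<close> acts on the
  coordinates in the finite set \<open>J\<close> only.\<close>

definition local_kernel :: "'i set \<Rightarrow> (('i \<Rightarrow> nat) \<Rightarrow> ('i \<Rightarrow> nat) \<Rightarrow> 'a::comm_ring_1) \<Rightarrow> bool" where
  "local_kernel J a \<longleftrightarrow> finite J \<and>
     (\<forall>w v. a w v \<noteq> 0 \<longrightarrow> w \<in> words \<and> v \<in> words \<and> agree_off J w v) \<and>
     (\<forall>w w' v v'. w \<in> words \<longrightarrow> w' \<in> words \<longrightarrow> v \<in> words \<longrightarrow> v' \<in> words \<longrightarrow>
        agree_off J w w' \<longrightarrow> agree_off J v v' \<longrightarrow> (\<forall>i\<in>J. w i = v i \<and> w' i = v' i) \<longrightarrow>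
        a w w' = a v v')"

lemma local_kernelI:
  assumes "finite J"
    and "\<And>w v. a w v \<noteq> 0 \<Longrightarrow> w \<in> words \<and> v \<in> words \<and> agree_off J w v"
    and "\<And>w w' v v'. w \<in> words \<Longrightarrow> w' \<in> words \<Longrightarrow> v \<in> words \<Longrightarrow> v' \<in> words \<Longrightarrow>
           agree_off J w w' \<Longrightarrow> agree_off J v v' \<Longrightarrow> (\<And>i. i \<in> J \<Longrightarrow> w i = v i \<and> w' i = v' i) \<Longrightarrow>
           a w w' = a v v'"
  shows "local_kernel J a"
  using assms unfolding local_kernel_def by blast

lemma local_kernel_finite: "local_kernel J a \<Longrightarrow> finite J"
  by (simp add: local_kernel_def)

lemma local_kernel_support:
  "local_kernel J a \<Longrightarrow> a w v \<noteq> 0 \<Longrightarrow> w \<in> words \<and> v \<in> words \<and> agree_off J w v"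
  unfolding local_kernel_def by blast

lemma local_kernel_cong:
  assumes "local_kernel J a" "w \<in> words" "w' \<in> words" "v \<in> words" "v' \<in> words"
    "agree_off J w w'" "agree_off J v v'" "\<And>i. i \<in> J \<Longrightarrow> w i = v i \<and> w' i = v' i"
  shows "a w w' = a v v'"
  using assms unfolding local_kernel_def by blast

lemma local_kernel_mono:
  assumes a: "local_kernel J a" and JK: "J \<subseteq> K" and K: "finite K"
  shows "local_kernel K a"
proof (rule local_kernelI[OF K])
  show "w \<in> words \<and> v \<in> words \<and> agree_off K w v" if "a w v \<noteq> 0" for w v
    using local_kernel_support[OF a that] agree_off_mono[OF _ JK] by blast
next
  fix w w' v v'
  assume h: "w \<in> words" "w' \<in> words" "v \<in> words" "v' \<in> words" "agree_off K w w'" "agree_off K v v'"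
    and eq: "\<And>i. i \<in> K \<Longrightarrow> w i = v i \<and> w' i = v' i"
  show "a w w' = a v v'"
  proof (cases "a w w' = 0 \<and> a v v' = 0")
    case False
    \<comment> \<open>one of the two pairs agrees off \<open>J\<close>; since both pairs coincide on \<open>K \<supseteq> J\<close>, so does the other\<close>
    then have "agree_off J w w' \<or> agree_off J v v'"
      using local_kernel_support[OF a] by blast
    then have "agree_off J w w' \<and> agree_off J v v'"
      using h(5,6) eq JK unfolding agree_off_def by (metis subsetD)
    then show ?thesis
      using local_kernel_cong[OF a h(1-4)] eq JK by blast
  qed simp
qed

lemma local_kernel_row_subset:
  "local_kernel J a \<Longrightarrow> J \<subseteq> K \<Longrightarrow> {v. a w v \<noteq> 0} \<subseteq> fibre K w"
  by (auto simp: fibre_def dest: local_kernel_support intro: agree_off_mono)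

definition kmult :: "(('i \<Rightarrow> nat) \<Rightarrow> ('i \<Rightarrow> nat) \<Rightarrow> 'a::comm_ring_1) \<Rightarrow> (('i \<Rightarrow> nat) \<Rightarrow> ('i \<Rightarrow> nat) \<Rightarrow> 'a)
    \<Rightarrow> (('i \<Rightarrow> nat) \<Rightarrow> ('i \<Rightarrow> nat) \<Rightarrow> 'a)" where
  "kmult a b = (\<lambda>w w'. \<Sum>v | a w v \<noteq> 0. a w v * b v w')"

definition kapply :: "(('i \<Rightarrow> nat) \<Rightarrow> ('i \<Rightarrow> nat) \<Rightarrow> 'a::comm_ring_1) \<Rightarrow> (('i \<Rightarrow> nat) \<Rightarrow> 'a)
    \<Rightarrow> (('i \<Rightarrow> nat) \<Rightarrow> 'a)" where
  "kapply a g = (\<lambda>w. \<Sum>v | a w v \<noteq> 0. a w v * g v)"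

definition kone :: "('i \<Rightarrow> nat) \<Rightarrow> ('i \<Rightarrow> nat) \<Rightarrow> 'a::comm_ring_1" where
  "kone = (\<lambda>w w'. if w \<in> words \<and> w' = w then 1 else 0)"

definition kscale :: "'a::comm_ring_1 \<Rightarrow> ('x \<Rightarrow> 'y \<Rightarrow> 'a) \<Rightarrow> ('x \<Rightarrow> 'y \<Rightarrow> 'a)" where
  "kscale c a = (\<lambda>w w'. c * a w w')"

lemma kmult_eq_sum_fibre:
  assumes "local_kernel J a" "J \<subseteq> K" "finite K"
  shows "kmult a b w w' = (\<Sum>v\<in>fibre K w. a w v * b v w')"
  unfolding kmult_def
  by (rule sum.mono_neutral_left[OF finite_fibre[OF assms(3)] local_kernel_row_subset[OF assms(1,2)]]) auto

lemma kapply_eq_sum_fibre: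
  assumes "local_kernel J a" "J \<subseteq> K" "finite K"
  shows "kapply a g w = (\<Sum>v\<in>fibre K w. a w v * g v)"
  unfolding kapply_def
  by (rule sum.mono_neutral_left[OF finite_fibre[OF assms(3)] local_kernel_row_subset[OF assms(1,2)]]) auto

lemma local_kernel_add:
  assumes a: "local_kernel J a" and b: "local_kernel J b"
  shows "local_kernel J (a + b)"
proof (rule local_kernelI[OF local_kernel_finite[OF a]])
  fix w v assume "(a + b) w v \<noteq> 0"
  then have "a w v \<noteq> 0 \<or> b w v \<noteq> 0" by auto
  then show "w \<in> words \<and> v \<in> words \<and> agree_off J w v"
    using local_kernel_support[OF a] local_kernel_support[OF b] by blast
next
  fix w w' v v'
  assume h: "w \<in> words" "w' \<in> words" "v \<in> words" "v' \<in> words" "agree_off J w w'" "agree_off J v v'"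
    and eq: "\<And>i. i \<in> J \<Longrightarrow> w i = v i \<and> w' i = v' i"
  show "(a + b) w w' = (a + b) v v'"
    using local_kernel_cong[OF a h eq] local_kernel_cong[OF b h eq] by simp
qed

lemma local_kernel_scale:
  assumes a: "local_kernel J a"
  shows "local_kernel J (kscale c a)"
proof (rule local_kernelI[OF local_kernel_finite[OF a]])
  fix w v assume "kscale c a w v \<noteq> 0"
  then have "a w v \<noteq> 0" by (auto simp: kscale_def)
  then show "w \<in> words \<and> v \<in> words \<and> agree_off J w v"
    by (rule local_kernel_support[OF a])
next
  fix w w' v v'
  assume h: "w \<in> words" "w' \<in> words" "v \<in> words" "v' \<in> words" "agree_off J w w'" "agree_off J v v'"
    and eq: "\<And>i. i \<in> J \<Longrightarrow> w i = v i \<and> w' i = v' i"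
  show "kscale c a w w' = kscale c a v v'"
    using local_kernel_cong[OF a h eq] by (simp add: kscale_def)
qed

lemma local_kernel_sum:
  assumes J: "finite J" and a: "\<And>s. s \<in> S \<Longrightarrow> local_kernel J (f s)"
  shows "local_kernel J (\<Sum>s\<in>S. f s)"
proof (rule local_kernelI[OF J])
  fix w v assume "(\<Sum>s\<in>S. f s) w v \<noteq> 0"
  then obtain s where "s \<in> S" "f s w v \<noteq> 0"
    by (metis sum.not_neutral_contains_not_neutral sum_fun_apply)
  then show "w \<in> words \<and> v \<in> words \<and> agree_off J w v"
    using local_kernel_support[OF a] by blast
next
  fix w w' v v'
  assume h: "w \<in> words" "w' \<in> words" "v \<in> words" "v' \<in> words" "agree_off J w w'" "agree_off J v v'"
    and eq: "\<And>i. i \<in> J \<Longrightarrow> w i = v i \<and> w' i = v' i"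
  show "(\<Sum>s\<in>S. f s) w w' = (\<Sum>s\<in>S. f s) v v'"
  proof -
    have "f s w w' = f s v v'" if "s \<in> S" for s
      using local_kernel_cong[OF a[OF that] h eq] .
    then show ?thesis by (simp add: sum_fun_apply)
  qed
qed

lemma local_kernel_one: "local_kernel {} kone"
proof (rule local_kernelI)
  show "w \<in> words \<and> v \<in> words \<and> agree_off {} w v" if "(kone w v :: 'a) \<noteq> 0" for w v
    using that by (auto simp: kone_def split: if_splits)
qed (auto simp: kone_def agree_off_empty)

lemma kmult_cong:
  assumes a: "local_kernel L a" and b: "local_kernel L b"
    and h: "w \<in> words" "w' \<in> words" "x \<in> words" "x' \<in> words" "agree_off L w w'" "agree_off L x x'"
    and eq: "\<And>i. i \<in> L \<Longrightarrow> w i = x i \<and> w' i = x' i"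
  shows "kmult a b w w' = kmult a b x x'"
proof -
  have L: "finite L" using local_kernel_finite[OF a] .
  \<comment> \<open>the summation variable is transported from the fibre of \<open>w\<close> to that of \<open>x\<close>\<close>
  let ?s = "\<lambda>v. override_on x v L"
  have "kmult a b w w' = (\<Sum>v\<in>fibre L w. a w v * b v w')"
    by (rule kmult_eq_sum_fibre[OF a subset_refl L])
  also have "\<dots> = (\<Sum>v\<in>fibre L w. a x (?s v) * b (?s v) x')"
  proof (rule sum.cong[OF refl])
    fix v assume v: "v \<in> fibre L w"
    have sv: "?s v \<in> fibre L x"
      using bij_betwE[OF bij_betw_override_on_fibre[OF L h(1) h(3)]] v by blast
    have vW: "v \<in> words" and wv: "agree_off L w v" using v by (auto simp: fibre_def)
    have sW: "?s v \<in> words" and xs: "agree_off L x (?s v)" using sv by (auto simp: fibre_def)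
    have "a w v = a x (?s v)"
      by (rule local_kernel_cong[OF a h(1) vW h(3) sW wv xs]) (use eq in simp)
    moreover have "b v w' = b (?s v) x'"
    proof (rule local_kernel_cong[OF b vW h(2) sW h(4)])
      show "agree_off L v w'" by (rule agree_off_trans[OF agree_off_sym[OF wv] h(5)])
      show "agree_off L (?s v) x'" by (rule agree_off_trans[OF agree_off_sym[OF xs] h(6)])
    qed (use eq in simp)
    ultimately show "a w v * b v w' = a x (?s v) * b (?s v) x'" by simp
  qed
  also have "\<dots> = (\<Sum>v\<in>fibre L x. a x v * b v x')"
    by (rule sum.reindex_bij_betw[OF bij_betw_override_on_fibre[OF L h(1) h(3)]])
  also have "\<dots> = kmult a b x x'"
    by (rule kmult_eq_sum_fibre[OF a subset_refl L, symmetric])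
  finally show ?thesis .
qed

lemma local_kernel_kmult:
  assumes a: "local_kernel J a" and b: "local_kernel K b"
  shows "local_kernel (J \<union> K) (kmult a b)"
proof -
  let ?L = "J \<union> K"
  have L: "finite ?L" using local_kernel_finite[OF a] local_kernel_finite[OF b] by simp
  have aL: "local_kernel ?L a" by (rule local_kernel_mono[OF a _ L]) auto
  have bL: "local_kernel ?L b" by (rule local_kernel_mono[OF b _ L]) auto
  show ?thesis
  proof (rule local_kernelI[OF L])
    fix w w' assume "kmult a b w w' \<noteq> 0"
    then obtain v where "a w v \<noteq> 0" "b v w' \<noteq> 0" unfolding kmult_def
      by (metis (no_types, lifting) mult_not_zero sum.neutral)
    then show "w \<in> words \<and> w' \<in> words \<and> agree_off ?L w w'"
      using local_kernel_support[OF aL] local_kernel_support[OF bL] agree_off_trans by blast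
  qed (rule kmult_cong[OF aL bL])
qed

lemma kmult_assoc:
  assumes a: "local_kernel J a" and b: "local_kernel K b" and c: "local_kernel M c"
  shows "kmult (kmult a b) c = kmult a (kmult b c)"
proof (intro ext)
  fix w w'
  let ?L = "J \<union> K \<union> M"
  have L: "finite ?L" using local_kernel_finite[OF a] local_kernel_finite[OF b] local_kernel_finite[OF c]
    by simp
  have JL: "J \<subseteq> ?L" and KL: "K \<subseteq> ?L" and JKL: "J \<union> K \<subseteq> ?L" by auto
  let ?F = "fibre ?L w"
  have "kmult (kmult a b) c w w' = (\<Sum>v\<in>?F. kmult a b w v * c v w')"
    by (rule kmult_eq_sum_fibre[OF local_kernel_kmult[OF a b] JKL L])
  also have "\<dots> = (\<Sum>v\<in>?F. (\<Sum>x\<in>?F. a w x * b x v) * c v w')"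
    by (simp add: kmult_eq_sum_fibre[OF a JL L])
  also have "\<dots> = (\<Sum>v\<in>?F. \<Sum>x\<in>?F. a w x * (b x v * c v w'))"
    by (simp add: sum_distrib_right mult.assoc)
  also have "\<dots> = (\<Sum>x\<in>?F. a w x * (\<Sum>v\<in>?F. b x v * c v w'))"
    by (subst sum.swap) (simp add: sum_distrib_left)
  also have "\<dots> = (\<Sum>x\<in>?F. a w x * kmult b c x w')"
    by (intro sum.cong refl arg_cong2[where f = "(*)"])
      (simp add: kmult_eq_sum_fibre[OF b KL L] fibre_eq)
  also have "\<dots> = kmult a (kmult b c) w w'"
    by (rule kmult_eq_sum_fibre[OF a JL L, symmetric])
  finally show "kmult (kmult a b) c w w' = kmult a (kmult b c) w w'" .
qed

lemma kapply_kmult: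
  assumes a: "local_kernel J a" and b: "local_kernel K b"
  shows "kapply (kmult a b) g = kapply a (kapply b g)"
proof (intro ext)
  fix w
  let ?L = "J \<union> K"
  have L: "finite ?L" using local_kernel_finite[OF a] local_kernel_finite[OF b] by simp
  have JL: "J \<subseteq> ?L" and KL: "K \<subseteq> ?L" by auto
  let ?F = "fibre ?L w"
  have "kapply (kmult a b) g w = (\<Sum>v\<in>?F. kmult a b w v * g v)"
    by (rule kapply_eq_sum_fibre[OF local_kernel_kmult[OF a b] subset_refl L])
  also have "\<dots> = (\<Sum>v\<in>?F. (\<Sum>x\<in>?F. a w x * b x v) * g v)"
    by (simp add: kmult_eq_sum_fibre[OF a JL L])
  also have "\<dots> = (\<Sum>v\<in>?F. \<Sum>x\<in>?F. a w x * (b x v * g v))"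
    by (simp add: sum_distrib_right mult.assoc)
  also have "\<dots> = (\<Sum>x\<in>?F. a w x * (\<Sum>v\<in>?F. b x v * g v))"
    by (subst sum.swap) (simp add: sum_distrib_left)
  also have "\<dots> = (\<Sum>x\<in>?F. a w x * kapply b g x)"
    by (intro sum.cong refl arg_cong2[where f = "(*)"])
      (simp add: kapply_eq_sum_fibre[OF b KL L] fibre_eq)
  also have "\<dots> = kapply a (kapply b g) w"
    by (rule kapply_eq_sum_fibre[OF a JL L, symmetric])
  finally show "kapply (kmult a b) g w = kapply a (kapply b g) w" .
qed

lemma kmult_add_left:
  assumes a: "local_kernel J a" and b: "local_kernel J b"
  shows "kmult (a + b) c = kmult a c + kmult b c"
proof -
  have J: "finite J" using local_kernel_finite[OF a] .
  show ?thesis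
    by (simp add: fun_eq_iff kmult_eq_sum_fibre[OF local_kernel_add[OF a b] subset_refl J]
        kmult_eq_sum_fibre[OF a subset_refl J] kmult_eq_sum_fibre[OF b subset_refl J]
        ring_distribs sum.distrib)
qed

lemma kmult_add_right:
  assumes a: "local_kernel J a"
  shows "kmult a (b + c) = kmult a b + kmult a c"
proof -
  have J: "finite J" using local_kernel_finite[OF a] .
  show ?thesis
    by (simp add: fun_eq_iff kmult_eq_sum_fibre[OF a subset_refl J] ring_distribs sum.distrib)
qed

lemma kmult_scale_left:
  assumes a: "local_kernel J a"
  shows "kmult (kscale k a) b = kscale k (kmult a b)"
proof -
  have J: "finite J" using local_kernel_finite[OF a] .
  show ?thesis
    unfolding kmult_eq_sum_fibre[OF local_kernel_scale[OF a] subset_refl J] fun_eq_iff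
    by (simp add: kmult_eq_sum_fibre[OF a subset_refl J] kscale_def sum_distrib_left mult.assoc)
qed

lemma kmult_scale_right:
  assumes a: "local_kernel J a"
  shows "kmult a (kscale k b) = kscale k (kmult a b)"
proof -
  have J: "finite J" using local_kernel_finite[OF a] .
  show ?thesis
    by (simp add: fun_eq_iff kmult_eq_sum_fibre[OF a subset_refl J] kscale_def sum_distrib_left
        mult.left_commute)
qed

lemma kone_row: "{v. (kone w v :: 'a::comm_ring_1) \<noteq> 0} = (if w \<in> words then {w} else {})"
  by (auto simp: kone_def)

lemma kmult_one_left:
  assumes a: "local_kernel J a"
  shows "kmult kone a = a"
  using local_kernel_support[OF a] by (auto simp: fun_eq_iff kmult_def kone_row) (auto simp: kone_def)

lemma kmult_one_right:
  assumes a: "local_kernel J a"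
  shows "kmult a kone = a"
proof (intro ext)
  fix w w'
  have J: "finite J" using local_kernel_finite[OF a] .
  have "kmult a kone w w' = (\<Sum>v\<in>fibre J w. if v = w' then a w w' else 0)"
    by (simp add: kmult_eq_sum_fibre[OF a subset_refl J]) (rule sum.cong, auto simp: kone_def fibre_def)
  also have "\<dots> = a w w'"
    using finite_fibre[OF J] local_kernel_support[OF a, of w w'] by (auto simp: fibre_def)
  finally show "kmult a kone w w' = a w w'" .
qed

lemma kapply_one: "kapply kone g w = (if w \<in> words then g w else 0)"
  by (auto simp: kapply_def kone_row) (simp add: kone_def)

lemma kapply_add_kernel:
  assumes a: "local_kernel J a" and b: "local_kernel J b"
  shows "kapply (a + b) g = kapply a g + kapply b g"
proof -
  have J: "finite J" using local_kernel_finite[OF a] .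
  show ?thesis
    by (simp add: fun_eq_iff kapply_eq_sum_fibre[OF local_kernel_add[OF a b] subset_refl J]
        kapply_eq_sum_fibre[OF a subset_refl J] kapply_eq_sum_fibre[OF b subset_refl J]
        ring_distribs sum.distrib)
qed

lemma kapply_zero_kernel: "kapply 0 g = 0"
  by (simp add: kapply_def fun_eq_iff)

lemma kapply_add: "kapply a (g + h) = kapply a g + kapply a h"
  by (simp add: kapply_def fun_eq_iff ring_distribs sum.distrib)

lemma kapply_scale: "kapply a (fun_scale c g) = fun_scale c (kapply a g)"
  by (simp add: kapply_def fun_scale_def fun_eq_iff sum_distrib_left mult.left_commute)

end

context tensor_words
begin

definition local_index :: "'i set \<Rightarrow> ('i \<Rightarrow> nat) \<Rightarrow> nat" where
  "local_index J = (SOME h. bij_betw h (local_words J) {0..<card (local_words J)})"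

definition local_word :: "'i set \<Rightarrow> nat \<Rightarrow> ('i \<Rightarrow> nat)" where
  "local_word J = inv_into (local_words J) (local_index J)"

lemma bij_betw_local_index:
  assumes "finite J"
  shows "bij_betw (local_index J) (local_words J) {0..<card (local_words J)}"
  unfolding local_index_def
  using someI_ex[OF ex_bij_betw_finite_nat[OF finite_local_words[OF assms]]] .

lemma local_index_less: "finite J \<Longrightarrow> x \<in> local_words J \<Longrightarrow> local_index J x < card (local_words J)"
  using bij_betwE[OF bij_betw_local_index] by fastforce

lemma local_word_in: "finite J \<Longrightarrow> k < card (local_words J) \<Longrightarrow> local_word J k \<in> local_words J"
  unfolding local_word_def using bij_betwE[OF bij_betw_inv_into[OF bij_betw_local_index]] by fastforce

lemma local_index_local_word: "finite J \<Longrightarrow> k < card (local_words J) \<Longrightarrow> local_index J (local_word J k) = k"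
  unfolding local_word_def by (simp add: bij_betw_inv_into_right[OF bij_betw_local_index])

lemma local_word_local_index: "finite J \<Longrightarrow> x \<in> local_words J \<Longrightarrow> local_word J (local_index J x) = x"
  unfolding local_word_def by (rule bij_betw_inv_into_left[OF bij_betw_local_index])

lemma local_index_restrict_eq_iff:
  assumes "finite J" "w \<in> words" "v \<in> words"
  shows "local_index J (restrict w J) = local_index J (restrict v J) \<longleftrightarrow> (\<forall>i\<in>J. w i = v i)"
proof -
  have "inj_on (local_index J) (local_words J)"
    using bij_betw_local_index[OF assms(1)] by (simp add: bij_betw_def)
  then have "local_index J (restrict w J) = local_index J (restrict v J) \<longleftrightarrow> restrict w J = restrict v J"
    by (rule inj_on_eq_iff) (simp_all add: restrict_in_local_words assms)
  also have "\<dots> \<longleftrightarrow> (\<forall>i\<in>J. w i = v i)"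
    by (metis restrict_apply' restrict_ext)
  finally show ?thesis .
qed

lemma bij_betw_local_index_fibre:
  "finite J \<Longrightarrow> w \<in> words \<Longrightarrow>
     bij_betw (\<lambda>v. local_index J (restrict v J)) (fibre J w) {0..<card (local_words J)}"
  using bij_betw_trans[OF bij_betw_restrict_fibre bij_betw_local_index] by (simp add: comp_def)

definition zero_extension :: "'i set \<Rightarrow> ('i \<Rightarrow> nat) \<Rightarrow> ('i \<Rightarrow> nat)" where
  "zero_extension J x = override_on (\<lambda>_. 0) x J"

lemma zero_extension_in_words: "finite J \<Longrightarrow> x \<in> local_words J \<Longrightarrow> zero_extension J x \<in> words"
  unfolding zero_extension_def by (rule override_on_in_words) (auto simp: zero_in_words local_words_def)

lemma restrict_zero_extension: "x \<in> local_words J \<Longrightarrow> restrict (zero_extension J x) J = x"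
  by (auto simp: zero_extension_def fun_eq_iff local_words_def PiE_def extensional_def)

lemma agree_off_zero_extension: "agree_off J (zero_extension J x) (zero_extension J y)"
  by (simp add: agree_off_def zero_extension_def)

lemma local_kernel_eq_zero_extension:
  assumes a: "local_kernel J a" and w: "w \<in> words" "w' \<in> words" "agree_off J w w'"
  shows "a w w' = a (zero_extension J (restrict w J)) (zero_extension J (restrict w' J))"
proof (rule local_kernel_cong[OF a w(1,2) _ _ w(3) agree_off_zero_extension])
  have J: "finite J" using local_kernel_finite[OF a] .
  show "zero_extension J (restrict w J) \<in> words" "zero_extension J (restrict w' J) \<in> words"
    using zero_extension_in_words[OF J] restrict_in_local_words w by auto
qed (simp add: zero_extension_def)

definition matrix_kernel :: "'i set \<Rightarrow> 'a::comm_ring_1 mat \<Rightarrow> ('i \<Rightarrow> nat) \<Rightarrow> ('i \<Rightarrow> nat) \<Rightarrow> 'a" where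
  "matrix_kernel J M = (\<lambda>w w'. if w \<in> words \<and> w' \<in> words \<and> agree_off J w w'
     then M $$ (local_index J (restrict w J), local_index J (restrict w' J)) else 0)"

lemma local_kernel_matrix_kernel: "finite J \<Longrightarrow> local_kernel J (matrix_kernel J M)"
proof (rule local_kernelI)
  show "w \<in> words \<and> v \<in> words \<and> agree_off J w v" if "matrix_kernel J M w v \<noteq> 0" for w v
    using that by (auto simp: matrix_kernel_def split: if_splits)
next
  fix w w' v v'
  assume "w \<in> words" "w' \<in> words" "v \<in> words" "v' \<in> words" "agree_off J w w'" "agree_off J v v'"
    and eq: "\<And>i. i \<in> J \<Longrightarrow> w i = v i \<and> w' i = v' i"
  moreover have "restrict w J = restrict v J" "restrict w' J = restrict v' J"
    using eq by (auto simp: fun_eq_iff)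
  ultimately show "matrix_kernel J M w w' = matrix_kernel J M v v'"
    by (simp add: matrix_kernel_def)
qed

context
  fixes J :: "'i set" and N :: nat
  assumes J: "finite J"
  defines "N \<equiv> card (local_words J)"
begin

lemma local_index_less_N: "w \<in> words \<Longrightarrow> local_index J (restrict w J) < N"
  unfolding N_def using local_index_less[OF J restrict_in_local_words] .

lemma matrix_kernel_add:
  "M \<in> carrier_mat N N \<Longrightarrow> M' \<in> carrier_mat N N \<Longrightarrow>
     matrix_kernel J (M + M') = matrix_kernel J M + matrix_kernel J M'"
  using local_index_less_N by (auto simp: fun_eq_iff matrix_kernel_def)

lemma matrix_kernel_smult:
  "M \<in> carrier_mat N N \<Longrightarrow> matrix_kernel J (c \<cdot>\<^sub>m M) = kscale c (matrix_kernel J M)"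
  using local_index_less_N by (auto simp: fun_eq_iff matrix_kernel_def kscale_def)

lemma matrix_kernel_one: "matrix_kernel J (1\<^sub>m N) = kone"
proof (intro ext)
  fix w w' :: "'i \<Rightarrow> nat"
  have "w = w'" if "w \<in> words" "w' \<in> words" "agree_off J w w'" "\<forall>i\<in>J. w i = w' i"
    using that by (auto simp: fun_eq_iff agree_off_def)
  then show "matrix_kernel J (1\<^sub>m N) w w' = kone w w'"
    using local_index_less_N local_index_restrict_eq_iff[OF J]
    by (auto simp: matrix_kernel_def kone_def)
qed

lemma sum_fibre_matrix_kernel:
  assumes M: "M \<in> carrier_mat N N" and M': "M' \<in> carrier_mat N N"
    and w: "w \<in> words" "w' \<in> words" "agree_off J w w'"
  shows "(\<Sum>v\<in>fibre J w. matrix_kernel J M w v * matrix_kernel J M' v w') = matrix_kernel J (M * M') w w'"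
proof -
  let ?k = "\<lambda>v. local_index J (restrict v J)"
  have "matrix_kernel J M w v * matrix_kernel J M' v w' = M $$ (?k w, ?k v) * M' $$ (?k v, ?k w')"
    if v: "v \<in> fibre J w" for v
  proof -
    have "v \<in> words" "agree_off J w v" using v by (auto simp: fibre_def)
    moreover have "agree_off J v w'"
      using agree_off_trans[OF agree_off_sym[OF \<open>agree_off J w v\<close>] w(3)] .
    ultimately show ?thesis using w by (simp add: matrix_kernel_def)
  qed
  then have "(\<Sum>v\<in>fibre J w. matrix_kernel J M w v * matrix_kernel J M' v w') =
      (\<Sum>v\<in>fibre J w. M $$ (?k w, ?k v) * M' $$ (?k v, ?k w'))"
    by (rule sum.cong[OF refl])
  also have "\<dots> = (\<Sum>k\<in>{0..<N}. M $$ (?k w, k) * M' $$ (k, ?k w'))"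
    unfolding N_def by (rule sum.reindex_bij_betw[OF bij_betw_local_index_fibre[OF J w(1)]])
  also have "\<dots> = (M * M') $$ (?k w, ?k w')"
    using M M' w local_index_less_N by (simp add: scalar_prod_def)
  finally show ?thesis using w by (simp add: matrix_kernel_def)
qed

lemma matrix_kernel_mult:
  assumes M: "M \<in> carrier_mat N N" and M': "M' \<in> carrier_mat N N"
  shows "matrix_kernel J (M * M') = kmult (matrix_kernel J M) (matrix_kernel J M')"
proof (intro ext)
  fix w w'
  have "kmult (matrix_kernel J M) (matrix_kernel J M') w w' =
      (\<Sum>v\<in>fibre J w. matrix_kernel J M w v * matrix_kernel J M' v w')"
    by (rule kmult_eq_sum_fibre[OF local_kernel_matrix_kernel[OF J] subset_refl J])
  also have "\<dots> = matrix_kernel J (M * M') w w'"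
  proof (cases "w \<in> words \<and> w' \<in> words \<and> agree_off J w w'")
    case True
    then show ?thesis by (intro sum_fibre_matrix_kernel[OF M M']) auto
  next
    case False
    have "matrix_kernel J M w v * matrix_kernel J M' v w' = 0" if v: "v \<in> fibre J w" for v
    proof (cases "w \<in> words \<and> v \<in> words \<and> w' \<in> words \<and> agree_off J v w'")
      case True
      then have "agree_off J w w'"
        using v agree_off_trans by (auto simp: fibre_def)
      then show ?thesis using False True by blast
    qed (auto simp: matrix_kernel_def)
    then show ?thesis
      using False by (auto simp: matrix_kernel_def intro: sum.neutral)
  qed
  finally show "matrix_kernel J (M * M') w w' = kmult (matrix_kernel J M) (matrix_kernel J M') w w'" ..
qed

lemma inj_on_matrix_kernel: "inj_on (matrix_kernel J) (carrier_mat N N)"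
proof (rule inj_onI)
  fix M M' :: "'a mat"
  assume M: "M \<in> carrier_mat N N" and M': "M' \<in> carrier_mat N N"
    and eq: "matrix_kernel J M = matrix_kernel J M'"
  show "M = M'"
  proof (rule eq_matI)
    fix i j assume "i < dim_row M'" "j < dim_col M'"
    then have ij: "i < N" "j < N" using M' by auto
    let ?w = "zero_extension J (local_word J i)" and ?w' = "zero_extension J (local_word J j)"
    have "?w \<in> words" "?w' \<in> words"
      using zero_extension_in_words[OF J] local_word_in[OF J] ij by (auto simp: N_def)
    moreover have "local_index J (restrict ?w J) = i" "local_index J (restrict ?w' J) = j"
      using restrict_zero_extension local_word_in[OF J] local_index_local_word[OF J] ij
      by (auto simp: N_def)
    ultimately show "M $$ (i, j) = M' $$ (i, j)"
      using fun_cong[OF fun_cong[OF eq, of ?w], of ?w']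
      by (simp add: matrix_kernel_def agree_off_zero_extension)
  qed (use M M' in auto)
qed

lemma matrix_kernel_surj:
  assumes a: "local_kernel J a"
  obtains M where "M \<in> carrier_mat N N" "matrix_kernel J M = a"
proof
  let ?z = "\<lambda>k. zero_extension J (local_word J k)"
  define M where "M = mat N N (\<lambda>(k, l). a (?z k) (?z l))"
  show "M \<in> carrier_mat N N" by (simp add: M_def)
  show "matrix_kernel J M = a"
  proof (intro ext)
    fix w w'
    show "matrix_kernel J M w w' = a w w'"
    proof (cases "w \<in> words \<and> w' \<in> words \<and> agree_off J w w'")
      case True
      have "matrix_kernel J M w w' = a (zero_extension J (restrict w J)) (zero_extension J (restrict w' J))"
        using True local_index_less_N local_word_local_index[OF J] restrict_in_local_words
        by (simp add: matrix_kernel_def M_def)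
      also have "\<dots> = a w w'"
        using True by (intro local_kernel_eq_zero_extension[OF a, symmetric]) auto
      finally show ?thesis .
    next
      case False
      then show ?thesis using local_kernel_support[OF a, of w w'] by (auto simp: matrix_kernel_def)
    qed
  qed
qed

end

end

section \<open>A product basis of the local operators\<close>

text \<open>Basis of \<open>M\<^bsub>n\<^esub>(F)\<close> used at each site: the label \<open>(0, 0)\<close> stands for the identity matrix, every
  other label \<open>(s, t)\<close> for the matrix unit \<open>E\<^bsub>s t\<^esub>\<close>.  Having the identity in the basis is what makes
  the product basis of the infinite tensor product consist of finitely supported labels.\<close>

definition site_basis :: "nat \<times> nat \<Rightarrow> nat \<Rightarrow> nat \<Rightarrow> 'a::comm_ring_1" where
  "site_basis c s t = (if c = (0, 0) then (if s = t then 1 else 0) else if c = (s, t) then 1 else 0)"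

text \<open>Coordinates of \<open>E\<^bsub>x y\<^esub>\<close> in this basis; \<open>E\<^bsub>0 0\<^esub> = 1 - \<Sum>\<^bsub>s \<noteq> 0\<^esub> E\<^bsub>s s\<^esub>\<close>.\<close>

definition site_coeff :: "nat \<times> nat \<Rightarrow> nat \<times> nat \<Rightarrow> 'a::comm_ring_1" where
  "site_coeff p c = (if p \<noteq> (0, 0) then (if c = p then 1 else 0)
     else if c = (0, 0) then 1 else if fst c = snd c then -1 else 0)"

lemma sum_site_coeff_site_basis:
  assumes "s < n" "t < n" "x < n" "y < n"
  shows "(\<Sum>c\<in>{..<n} \<times> {..<n}. site_coeff (x, y) c * site_basis c s t) =
    (if s = x \<and> t = y then (1::'a::comm_ring_1) else 0)"
proof -
  let ?P = "{..<n} \<times> {..<n}"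
  let ?K = "site_coeff (x, y) (0, 0) * (if s = t then 1 else 0) :: 'a"
  let ?L = "if (s, t) \<noteq> (0, 0) then site_coeff (x, y) (s, t) else 0 :: 'a"
  have "(\<Sum>c\<in>?P. site_coeff (x, y) c * site_basis c s t) =
        (\<Sum>c\<in>?P. (if c = (0, 0) then ?K else 0) + (if c = (s, t) then ?L else 0))"
    by (rule sum.cong) (auto simp: site_basis_def)
  also have "\<dots> = ?K + ?L"
    using assms by (simp add: sum.distrib)
  also have "\<dots> = (if s = x \<and> t = y then 1 else 0)"
    by (auto simp: site_coeff_def)
  finally show ?thesis .
qed

definition sites :: "('i \<Rightarrow> nat \<times> nat) \<Rightarrow> 'i set" where
  "sites u = {i. u i \<noteq> (0, 0)}"

context tensor_words
begin

definition labels :: "('i \<Rightarrow> nat \<times> nat) set" where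
  "labels = {u. finite (sites u) \<and> (\<forall>i. fst (u i) < d i \<and> snd (u i) < d i)}"

definition basis_kernel :: "('i \<Rightarrow> nat \<times> nat) \<Rightarrow> ('i \<Rightarrow> nat) \<Rightarrow> ('i \<Rightarrow> nat) \<Rightarrow> 'a::comm_ring_1" where
  "basis_kernel u = (\<lambda>w w'. if w \<in> words \<and> w' \<in> words \<and> agree_off (sites u) w w'
     then \<Prod>i\<in>sites u. site_basis (u i) (w i) (w' i) else 0)"

definition coordinates :: "(('i \<Rightarrow> nat \<times> nat) \<Rightarrow> 'a::comm_ring_1) set" where
  "coordinates = {f. finite {u. f u \<noteq> 0} \<and> {u. f u \<noteq> 0} \<subseteq> labels}"

definition basis_comb :: "(('i \<Rightarrow> nat \<times> nat) \<Rightarrow> 'a::comm_ring_1) \<Rightarrow> ('i \<Rightarrow> nat) \<Rightarrow> ('i \<Rightarrow> nat) \<Rightarrow> 'a" where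
  "basis_comb f = (\<lambda>w w'. \<Sum>u | f u \<noteq> 0. f u * basis_kernel u w w')"

definition coordinate_sites :: "(('i \<Rightarrow> nat \<times> nat) \<Rightarrow> 'a::comm_ring_1) \<Rightarrow> 'i set" where
  "coordinate_sites f = (\<Union>u\<in>{u. f u \<noteq> 0}. sites u)"

lemma local_kernel_basis_kernel: "u \<in> labels \<Longrightarrow> local_kernel (sites u) (basis_kernel u)"
proof (rule local_kernelI)
  show "w \<in> words \<and> v \<in> words \<and> agree_off (sites u) w v" if "basis_kernel u w v \<noteq> 0" for w v
    using that by (auto simp: basis_kernel_def split: if_splits)
qed (auto simp: labels_def basis_kernel_def intro!: prod.cong)

lemma basis_comb_eq_sum:
  assumes "finite S" "{u. f u \<noteq> 0} \<subseteq> S"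
  shows "basis_comb f w w' = (\<Sum>u\<in>S. f u * basis_kernel u w w')"
  unfolding basis_comb_def by (rule sum.mono_neutral_left[OF assms]) auto

lemma coordinatesD:
  "f \<in> coordinates \<Longrightarrow> finite {u. f u \<noteq> 0}"
  "f \<in> coordinates \<Longrightarrow> f u \<noteq> 0 \<Longrightarrow> u \<in> labels"
  by (auto simp: coordinates_def)

lemma finite_coordinate_sites: "f \<in> coordinates \<Longrightarrow> finite (coordinate_sites f)"
  by (auto simp: coordinate_sites_def coordinates_def labels_def)

lemma local_kernel_basis_comb:
  assumes f: "f \<in> coordinates" and J: "coordinate_sites f \<subseteq> J" "finite J"
  shows "local_kernel J (basis_comb f)"
proof -
  have "local_kernel J (kscale (f u) (basis_kernel u))" if "f u \<noteq> 0" for u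
  proof (rule local_kernel_scale[OF local_kernel_mono[OF local_kernel_basis_kernel _ J(2)]])
    show "u \<in> labels" using coordinatesD(2)[OF f that] .
    show "sites u \<subseteq> J" using that J(1) by (auto simp: coordinate_sites_def)
  qed
  then have "local_kernel J (\<Sum>u | f u \<noteq> 0. kscale (f u) (basis_kernel u))"
    by (intro local_kernel_sum J) simp
  moreover have "(\<Sum>u | f u \<noteq> 0. kscale (f u) (basis_kernel u)) = basis_comb f"
    by (simp add: fun_eq_iff sum_fun_apply basis_comb_def kscale_def)
  ultimately show ?thesis by simp
qed

lemma zero_in_coordinates: "0 \<in> coordinates"
  by (simp add: coordinates_def)

lemma coordinates_add:
  assumes f: "f \<in> coordinates" and g: "g \<in> coordinates"
  shows "f + g \<in> coordinates"
proof -
  have sub: "{u. (f + g) u \<noteq> 0} \<subseteq> {u. f u \<noteq> 0} \<union> {u. g u \<noteq> 0}" by auto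
  moreover have "finite ({u. f u \<noteq> 0} \<union> {u. g u \<noteq> 0})"
    using coordinatesD(1)[OF f] coordinatesD(1)[OF g] by simp
  ultimately have "finite {u. (f + g) u \<noteq> 0}"
    by (rule finite_subset)
  moreover have "{u. (f + g) u \<noteq> 0} \<subseteq> labels"
    using sub f g by (auto simp: coordinates_def)
  ultimately show ?thesis by (simp add: coordinates_def)
qed

lemma coordinates_scale:
  assumes "f \<in> coordinates"
  shows "(\<lambda>u. c * f u) \<in> coordinates"
proof -
  have "{u. c * f u \<noteq> 0} \<subseteq> {u. f u \<noteq> 0}" by auto
  with assms show ?thesis
    unfolding coordinates_def using finite_subset by blast
qed

lemma coordinates_sum: "(\<And>p. p \<in> P \<Longrightarrow> g p \<in> coordinates) \<Longrightarrow> (\<Sum>p\<in>P. g p) \<in> coordinates"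
  by (induction P rule: infinite_finite_induct) (simp_all add: zero_in_coordinates coordinates_add)

lemma basis_comb_add:
  assumes f: "f \<in> coordinates" and g: "g \<in> coordinates"
  shows "basis_comb (f + g) = basis_comb f + basis_comb g"
proof -
  let ?S = "{u. f u \<noteq> 0} \<union> {u. g u \<noteq> 0}"
  have "finite ?S" using coordinatesD(1)[OF f] coordinatesD(1)[OF g] by simp
  moreover have "{u. (f + g) u \<noteq> 0} \<subseteq> ?S" by auto
  ultimately show ?thesis
    by (simp add: fun_eq_iff basis_comb_eq_sum[of ?S] ring_distribs sum.distrib)
qed

lemma basis_comb_scale:
  assumes f: "f \<in> coordinates"
  shows "basis_comb (\<lambda>u. c * f u) = kscale c (basis_comb f)"
proof -
  have S: "finite {u. f u \<noteq> 0}" using coordinatesD(1)[OF f] .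
  have "{u. c * f u \<noteq> 0} \<subseteq> {u. f u \<noteq> 0}" by auto
  then show ?thesis
    by (simp add: fun_eq_iff kscale_def basis_comb_eq_sum[OF S] basis_comb_eq_sum[OF S subset_refl]
        sum_distrib_left mult.assoc)
qed

lemma basis_comb_sum:
  "(\<And>p. p \<in> P \<Longrightarrow> g p \<in> coordinates) \<Longrightarrow> basis_comb (\<Sum>p\<in>P. g p) = (\<Sum>p\<in>P. basis_comb (g p))"
proof (induction P rule: infinite_finite_induct)
  case (insert q Q)
  have "basis_comb (\<Sum>p\<in>insert q Q. g p) = basis_comb (g q + (\<Sum>p\<in>Q. g p))"
    by (simp only: sum.insert[OF insert.hyps])
  also have "\<dots> = basis_comb (g q) + basis_comb (\<Sum>p\<in>Q. g p)"
    using insert.prems by (intro basis_comb_add coordinates_sum) auto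
  also have "\<dots> = (\<Sum>p\<in>insert q Q. basis_comb (g p))"
    using insert by (simp only: sum.insert[OF insert.hyps]) simp
  finally show ?case .
qed (simp_all add: basis_comb_def zero_fun_def)

definition left_word :: "('i \<Rightarrow> nat \<times> nat) \<Rightarrow> ('i \<Rightarrow> nat)" where
  "left_word u = (\<lambda>i. fst (u i))"

definition right_word :: "('i \<Rightarrow> nat \<times> nat) \<Rightarrow> ('i \<Rightarrow> nat)" where
  "right_word u = (\<lambda>i. snd (u i))"

lemma left_right_word_in_words:
  assumes "u \<in> labels"
  shows "left_word u \<in> words" "right_word u \<in> words"
proof -
  have "{i. left_word u i \<noteq> 0} \<subseteq> sites u" "{i. right_word u i \<noteq> 0} \<subseteq> sites u"
    by (auto simp: left_word_def right_word_def sites_def)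
  moreover have "finite (sites u)" "\<forall>i. left_word u i < d i \<and> right_word u i < d i"
    using assms by (auto simp: labels_def left_word_def right_word_def)
  ultimately show "left_word u \<in> words" "right_word u \<in> words"
    unfolding words_def using finite_subset by blast+
qed

lemma basis_kernel_left_right_word:
  assumes "u \<in> labels"
  shows "basis_kernel u (left_word u) (right_word u) = 1"
proof -
  have "agree_off (sites u) (left_word u) (right_word u)"
    by (auto simp: agree_off_def sites_def left_word_def right_word_def)
  moreover have "(\<Prod>i\<in>sites u. site_basis (u i) (left_word u i) (right_word u i) :: 'a) = 1"
    by (rule prod.neutral) (simp add: site_basis_def sites_def left_word_def right_word_def)
  ultimately show ?thesis
    using left_right_word_in_words[OF assms] by (simp add: basis_kernel_def)
qed

lemma basis_kernel_left_right_word_nonzero: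
  assumes v: "v \<in> labels" and nz: "(basis_kernel v (left_word u) (right_word u) :: 'a::comm_ring_1) \<noteq> 0"
  shows "sites v \<subseteq> sites u" "\<And>i. i \<in> sites v \<Longrightarrow> v i = u i"
proof -
  have "(\<Prod>i\<in>sites v. site_basis (v i) (left_word u i) (right_word u i) :: 'a) \<noteq> 0"
    using nz by (auto simp: basis_kernel_def split: if_splits)
  moreover have "finite (sites v)" using v by (simp add: labels_def)
  ultimately have "(site_basis (v i) (left_word u i) (right_word u i) :: 'a) \<noteq> 0" if "i \<in> sites v" for i
    using that prod_zero[of "sites v" "\<lambda>i. site_basis (v i) (left_word u i) (right_word u i) :: 'a"] by blast
  moreover have "v i \<noteq> (0, 0)" if "i \<in> sites v" for i
    using that by (simp add: sites_def)
  ultimately have "v i = (left_word u i, right_word u i)" if "i \<in> sites v" for i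
    using that unfolding site_basis_def by (metis (full_types))
  then show eq: "v i = u i" if "i \<in> sites v" for i
    using that by (simp add: left_word_def right_word_def)
  show "sites v \<subseteq> sites u"
    using eq by (auto simp: sites_def)
qed

lemma basis_comb_eq_0:
  assumes f: "f \<in> coordinates" and z: "basis_comb f = 0"
  shows "f = 0"
proof (rule ccontr)
  assume "f \<noteq> 0"
  then obtain u0 where "f u0 \<noteq> 0" by (auto simp: fun_eq_iff)
  then obtain u where u: "f u \<noteq> 0" and min: "\<And>v. f v \<noteq> 0 \<Longrightarrow> card (sites u) \<le> card (sites v)"
    using ex_has_least_nat[of "\<lambda>u. f u \<noteq> 0" u0 "\<lambda>u. card (sites u)"] by blast
  have uL: "u \<in> labels" using coordinatesD(2)[OF f u] .
  \<comment> \<open>a support-minimal label is the only one whose kernel survives at its diagonal pair\<close>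
  have other: "basis_kernel v (left_word u) (right_word u) = 0" if v: "f v \<noteq> 0" "v \<noteq> u" for v
  proof (rule ccontr)
    assume nz: "basis_kernel v (left_word u) (right_word u) \<noteq> 0"
    have vL: "v \<in> labels" using coordinatesD(2)[OF f v(1)] .
    note sub = basis_kernel_left_right_word_nonzero[OF vL nz]
    have fin: "finite (sites u)" using uL by (simp add: labels_def)
    then have "card (sites v) = card (sites u)"
      using card_mono[OF fin sub(1)] min[OF v(1)] by simp
    then have "sites v = sites u"
      using card_subset_eq[OF fin sub(1)] by simp
    have "v i = u i" for i
    proof (cases "i \<in> sites v")
      case False
      moreover from False have "i \<notin> sites u" using \<open>sites v = sites u\<close> by simp
      ultimately show ?thesis by (simp add: sites_def)
    qed (rule sub(2))
    then have "v = u" ..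
    then show False using v(2) by simp
  qed
  have "0 = basis_comb f (left_word u) (right_word u)"
    using z by simp
  also have "\<dots> = (\<Sum>v | f v \<noteq> 0. if v = u then f u else 0)"
    unfolding basis_comb_def
    by (rule sum.cong) (auto simp: other basis_kernel_left_right_word[OF uL])
  also have "\<dots> = f u"
    using coordinatesD(1)[OF f] u by simp
  finally show False using u by simp
qed

lemma inj_on_basis_comb: "inj_on basis_comb coordinates"
proof (rule inj_onI)
  fix f g assume f: "f \<in> coordinates" and g: "g \<in> coordinates" and eq: "basis_comb f = basis_comb g"
  have g': "(\<lambda>u. (-1) * g u) \<in> coordinates" using coordinates_scale[OF g] .
  have "basis_comb (f + (\<lambda>u. (-1) * g u)) = basis_comb g + kscale (-1) (basis_comb g)"
    unfolding basis_comb_add[OF f g'] basis_comb_scale[OF g] eq ..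
  also have "\<dots> = 0"
    by (simp add: fun_eq_iff kscale_def)
  finally have "basis_comb (f + (\<lambda>u. (-1) * g u)) = 0" .
  then have "f + (\<lambda>u. (-1) * g u) = 0"
    using basis_comb_eq_0[OF coordinates_add[OF f g']] by blast
  then show "f = g" by (simp add: fun_eq_iff)
qed

lemma prod_indicator:
  "finite J \<Longrightarrow> (\<Prod>i\<in>J. if P i then 1 else 0 :: 'a::comm_ring_1) = (if \<forall>i\<in>J. P i then 1 else 0)"
  by (induction J rule: finite_induct) auto

definition labels_on :: "'i set \<Rightarrow> ('i \<Rightarrow> nat \<times> nat) set" where
  "labels_on J = {u. (\<forall>i\<in>J. fst (u i) < d i \<and> snd (u i) < d i) \<and> (\<forall>i. i \<notin> J \<longrightarrow> u i = (0, 0))}"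

lemma sites_labels_on: "u \<in> labels_on J \<Longrightarrow> sites u \<subseteq> J"
  by (auto simp: labels_on_def sites_def)

lemma labels_on_subset:
  assumes J: "finite J"
  shows "labels_on J \<subseteq> labels"
proof
  fix u assume u: "u \<in> labels_on J"
  have "finite (sites u)"
    using finite_subset[OF sites_labels_on[OF u] J] .
  moreover have "fst (u i) < d i \<and> snd (u i) < d i" for i
    using u dim_pos[of i] by (cases "i \<in> J") (auto simp: labels_on_def)
  ultimately show "u \<in> labels" by (simp add: labels_def)
qed

lemma bij_betw_restrict_labels_on:
  "bij_betw (\<lambda>u. restrict u J) (labels_on J) (PiE J (\<lambda>i. {..<d i} \<times> {..<d i}))"
proof (rule bij_betw_byWitness[where f' = "\<lambda>p i. if i \<in> J then p i else (0, 0)"])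
  show "(\<lambda>p i. if i \<in> J then p i else (0, 0)) ` PiE J (\<lambda>i. {..<d i} \<times> {..<d i}) \<subseteq> labels_on J"
    by (auto simp: labels_on_def PiE_def Pi_def mem_Times_iff)
qed (auto simp: labels_on_def fun_eq_iff PiE_def extensional_def mem_Times_iff)

lemma finite_labels_on: "finite J \<Longrightarrow> finite (labels_on J)"
  using bij_betw_finite[OF bij_betw_restrict_labels_on] by (simp add: finite_PiE)

lemma basis_kernel_labels_on:
  assumes J: "finite J" and u: "u \<in> labels_on J"
  shows "basis_kernel u w w' = (if w \<in> words \<and> w' \<in> words \<and> agree_off J w w'
    then \<Prod>i\<in>J. site_basis (u i) (w i) (w' i) else (0::'a::comm_ring_1))"
proof -
  have sJ: "sites u \<subseteq> J" using sites_labels_on[OF u] .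
  \<comment> \<open>outside \<open>sites u\<close> the site factors are identity matrices\<close>
  have "(\<Prod>i\<in>J. site_basis (u i) (w i) (w' i) :: 'a) =
      (\<Prod>i\<in>J - sites u. site_basis (u i) (w i) (w' i)) * (\<Prod>i\<in>sites u. site_basis (u i) (w i) (w' i))"
    by (rule prod.subset_diff[OF sJ J])
  also have "(\<Prod>i\<in>J - sites u. site_basis (u i) (w i) (w' i) :: 'a) =
      (\<Prod>i\<in>J - sites u. if w i = w' i then 1 else 0)"
    by (rule prod.cong) (auto simp: site_basis_def sites_def)
  finally have "(\<Prod>i\<in>J. site_basis (u i) (w i) (w' i) :: 'a) =
      (if \<forall>i\<in>J - sites u. w i = w' i then 1 else 0) * (\<Prod>i\<in>sites u. site_basis (u i) (w i) (w' i))"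
    using J by (simp add: prod_indicator)
  moreover have "agree_off J w w' \<Longrightarrow> agree_off (sites u) w w' \<longleftrightarrow> (\<forall>i\<in>J - sites u. w i = w' i)"
    by (auto simp: agree_off_def)
  moreover have "agree_off (sites u) w w' \<Longrightarrow> agree_off J w w'"
    using agree_off_mono sJ by blast
  ultimately show ?thesis
    by (auto simp: basis_kernel_def)
qed

definition unit_coords :: "'i set \<Rightarrow> ('i \<Rightarrow> nat) \<Rightarrow> ('i \<Rightarrow> nat) \<Rightarrow> ('i \<Rightarrow> nat \<times> nat) \<Rightarrow> 'a::comm_ring_1" where
  "unit_coords J x y = (\<lambda>u. if u \<in> labels_on J then \<Prod>i\<in>J. site_coeff (x i, y i) (u i) else 0)"

definition unit_kernel :: "'i set \<Rightarrow> ('i \<Rightarrow> nat) \<Rightarrow> ('i \<Rightarrow> nat) \<Rightarrow> ('i \<Rightarrow> nat) \<Rightarrow> ('i \<Rightarrow> nat) \<Rightarrow> 'a::comm_ring_1" where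
  "unit_kernel J x y = (\<lambda>w w'. if w \<in> words \<and> w' \<in> words \<and> agree_off J w w' \<and>
     restrict w J = x \<and> restrict w' J = y then 1 else 0)"

lemma unit_coords_in_coordinates:
  assumes J: "finite J"
  shows "unit_coords J x y \<in> coordinates"
proof -
  have "{u. unit_coords J x y u \<noteq> 0} \<subseteq> labels_on J"
    by (auto simp: unit_coords_def split: if_splits)
  then show ?thesis
    unfolding coordinates_def using finite_subset finite_labels_on[OF J] labels_on_subset[OF J] by blast
qed

lemma basis_comb_unit_coords:
  assumes J: "finite J" and x: "x \<in> local_words J" and y: "y \<in> local_words J"
  shows "basis_comb (unit_coords J x y) = (unit_kernel J x y :: _ \<Rightarrow> _ \<Rightarrow> 'a::comm_ring_1)"
proof (intro ext)
  fix w w'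
  have sub: "{u. (unit_coords J x y u :: 'a) \<noteq> 0} \<subseteq> labels_on J"
    by (auto simp: unit_coords_def split: if_splits)
  show "basis_comb (unit_coords J x y) w w' = (unit_kernel J x y w w' :: 'a)"
  proof (cases "w \<in> words \<and> w' \<in> words \<and> agree_off J w w'")
    case True
    then have "\<forall>i. w i < d i \<and> w' i < d i" by (simp add: words_def)
    moreover have "\<forall>i\<in>J. x i < d i \<and> y i < d i" using x y by (auto simp: local_words_def)
    ultimately have site: "(\<Sum>c\<in>{..<d i} \<times> {..<d i}. site_coeff (x i, y i) c * site_basis c (w i) (w' i)) =
        (if w i = x i \<and> w' i = y i then 1 else (0::'a))" if "i \<in> J" for i
      using that by (intro sum_site_coeff_site_basis) auto
    have "basis_comb (unit_coords J x y) w w' = (\<Sum>u\<in>labels_on J. unit_coords J x y u * basis_kernel u w w' :: 'a)"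
      by (rule basis_comb_eq_sum[OF finite_labels_on[OF J] sub])
    also have "\<dots> = (\<Sum>u\<in>labels_on J.
        \<Prod>i\<in>J. site_coeff (x i, y i) (restrict u J i) * site_basis (restrict u J i) (w i) (w' i))"
      using True by (intro sum.cong refl)
        (simp add: unit_coords_def basis_kernel_labels_on[OF J] prod.distrib cong: prod.cong)
    also have "\<dots> = (\<Sum>p\<in>PiE J (\<lambda>i. {..<d i} \<times> {..<d i}). \<Prod>i\<in>J. site_coeff (x i, y i) (p i) * site_basis (p i) (w i) (w' i))"
      by (rule sum.reindex_bij_betw[OF bij_betw_restrict_labels_on])
    also have "\<dots> = (\<Prod>i\<in>J. \<Sum>c\<in>{..<d i} \<times> {..<d i}. site_coeff (x i, y i) c * site_basis c (w i) (w' i))"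
      by (rule prod_sum_PiE[symmetric]) (simp_all add: J)
    also have "\<dots> = (if \<forall>i\<in>J. w i = x i \<and> w' i = y i then 1 else 0)"
      using J by (simp add: site prod_indicator cong: prod.cong)
    also have "\<dots> = unit_kernel J x y w w'"
      using True x y by (auto simp: unit_kernel_def local_words_def PiE_def extensional_def fun_eq_iff)
    finally show ?thesis .
  next
    case False
    then show ?thesis
      by (auto simp: basis_comb_def unit_kernel_def basis_kernel_labels_on[OF J] dest!: subsetD[OF sub]
          intro!: sum.neutral)
  qed
qed

lemma local_kernel_unit_expansion:
  assumes a: "local_kernel J a"
  shows "a = (\<Sum>p\<in>local_words J \<times> local_words J.
    kscale (a (zero_extension J (fst p)) (zero_extension J (snd p))) (unit_kernel J (fst p) (snd p)))"
proof (intro ext)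
  fix w w'
  have J: "finite J" using local_kernel_finite[OF a] .
  show "a w w' = (\<Sum>p\<in>local_words J \<times> local_words J.
    kscale (a (zero_extension J (fst p)) (zero_extension J (snd p))) (unit_kernel J (fst p) (snd p))) w w'"
  proof (cases "w \<in> words \<and> w' \<in> words \<and> agree_off J w w'")
    case True
    let ?p = "(restrict w J, restrict w' J)"
    let ?a = "\<lambda>p. a (zero_extension J (fst p)) (zero_extension J (snd p))"
    have p: "?p \<in> local_words J \<times> local_words J"
      using True by (simp add: restrict_in_local_words)
    have "(\<Sum>p\<in>local_words J \<times> local_words J. kscale (?a p) (unit_kernel J (fst p) (snd p))) w w' =
        (\<Sum>p\<in>local_words J \<times> local_words J. if p = ?p then ?a p else 0)"
      unfolding sum_fun_apply
      by (rule sum.cong) (use True in \<open>auto simp: kscale_def unit_kernel_def prod_eq_iff\<close>)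
    also have "\<dots> = ?a ?p"
      using p finite_local_words[OF J] by simp
    also have "\<dots> = a w w'"
      using True local_kernel_eq_zero_extension[OF a, of w w', symmetric] by simp
    finally show ?thesis by simp
  next
    case False
    then have "a w w' = 0"
      using local_kernel_support[OF a, of w w'] by blast
    with False show ?thesis
      by (auto simp: sum_fun_apply kscale_def unit_kernel_def)
  qed
qed

lemma basis_comb_surj:
  assumes a: "local_kernel J a"
  obtains f where "f \<in> coordinates" "basis_comb f = a"
proof
  have J: "finite J" using local_kernel_finite[OF a] .
  let ?P = "local_words J \<times> local_words J"
  define c where "c p = a (zero_extension J (fst p)) (zero_extension J (snd p))" for p
  define f where "f = (\<Sum>p\<in>?P. (\<lambda>u. c p * unit_coords J (fst p) (snd p) u))"
  have coords: "(\<lambda>u. c p * unit_coords J (fst p) (snd p) u) \<in> coordinates" for p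
    by (rule coordinates_scale[OF unit_coords_in_coordinates[OF J]])
  then show "f \<in> coordinates"
    unfolding f_def by (rule coordinates_sum)
  have "basis_comb f = (\<Sum>p\<in>?P. kscale (c p) (basis_comb (unit_coords J (fst p) (snd p))))"
    unfolding f_def basis_comb_sum[OF coords]
    by (simp add: basis_comb_scale[OF unit_coords_in_coordinates[OF J]])
  also have "\<dots> = (\<Sum>p\<in>?P. kscale (c p) (unit_kernel J (fst p) (snd p)))"
    by (intro sum.cong refl) (auto simp: basis_comb_unit_coords[OF J])
  also have "\<dots> = a"
    unfolding c_def by (rule local_kernel_unit_expansion[OF a, symmetric])
  finally show "basis_comb f = a" .
qed

end

context tensor_words
begin

lemma inj_on_label_graph: "inj_on (\<lambda>u. (\<lambda>i. (i, u i)) ` sites u) labels"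
proof (rule inj_onI)
  fix u v assume eq: "(\<lambda>i. (i, u i)) ` sites u = (\<lambda>i. (i, v i)) ` sites v"
  show "u = v"
  proof
    fix i
    show "u i = v i"
    proof (cases "i \<in> sites u \<or> i \<in> sites v")
      case True
      then have "(i, u i) \<in> (\<lambda>i. (i, v i)) ` sites v \<or> (i, v i) \<in> (\<lambda>i. (i, u i)) ` sites u"
        using eq by blast
      then show ?thesis by auto
    qed (simp add: sites_def)
  qed
qed

lemma labels_eqpoll_UNIV:
  assumes inf: "infinite (UNIV :: 'i set)" and d2: "\<And>i. 2 \<le> d i"
  shows "labels \<approx> (UNIV :: 'i set)"
proof (rule lepoll_antisym)
  have "(\<lambda>u. (\<lambda>i. (i, u i)) ` sites u) ` labels \<subseteq> Fpow UNIV"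
    by (auto simp: Fpow_def labels_def)
  then have "labels \<lesssim> Fpow (UNIV :: ('i \<times> (nat \<times> nat)) set)"
    using inj_on_label_graph unfolding lepoll_def by blast
  also have "Fpow (UNIV :: ('i \<times> (nat \<times> nat)) set) \<approx> (UNIV :: ('i \<times> (nat \<times> nat)) set)"
    using inf by (intro eqpoll_Fpow) (simp add: finite_prod)
  also have "(UNIV :: ('i \<times> (nat \<times> nat)) set) \<lesssim> (UNIV :: ('i \<times> 'i) set)"
  proof -
    have "(UNIV :: (nat \<times> nat) set) \<lesssim> (UNIV :: nat set)"
      unfolding lepoll_def by (intro exI[of _ prod_encode]) (simp add: inj_prod_encode)
    also have "(UNIV :: nat set) \<lesssim> (UNIV :: 'i set)"
      using inf infinite_le_lepoll by blast
    finally have "(UNIV :: (nat \<times> nat) set) \<lesssim> (UNIV :: 'i set)" .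
    from times_lepoll_mono[OF lepoll_refl[of "UNIV :: 'i set"] this] show ?thesis
      by simp
  qed
  also have "(UNIV :: ('i \<times> 'i) set) \<approx> (UNIV :: 'i set)"
    using card_of_Times_same_infinite[OF inf] by (simp add: eqpoll_iff_card_of_ordIso)
  finally show "labels \<lesssim> (UNIV :: 'i set)" .
next
  let ?single = "\<lambda>i j. if j = i then (0::nat, 1::nat) else (0, 0)"
  have "inj ?single"
  proof (rule injI)
    fix i i' assume "?single i = ?single i'"
    from fun_cong[OF this, of i] show "i = i'" by (simp split: if_splits)
  qed
  moreover have "?single i \<in> labels" for i
  proof -
    have "sites (?single i) = {i}" by (auto simp: sites_def)
    moreover have "0 < d j" "1 < d j" for j using d2[of j] by auto
    ultimately show ?thesis by (simp add: labels_def)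
  qed
  ultimately show "(UNIV :: 'i set) \<lesssim> labels"
    unfolding lepoll_def by blast
qed

end

section \<open>The infinite tensor product of matrix algebras\<close>

definition mat_unit :: "nat \<Rightarrow> nat \<Rightarrow> nat \<Rightarrow> 'a::comm_ring_1 mat" where
  "mat_unit n i j = mat n n (\<lambda>(a, b). if a = i \<and> b = j then 1 else 0)"

definition diag_prefix :: "nat \<Rightarrow> nat \<Rightarrow> 'a::comm_ring_1 mat" where
  "diag_prefix n k = mat n n (\<lambda>(a, b). if a = b \<and> a < k then 1 else 0)"

lemma mat_unit_carrier [simp]: "mat_unit n i j \<in> carrier_mat n n"
  by (simp add: mat_unit_def)

lemma diag_prefix_carrier [simp]: "diag_prefix n k \<in> carrier_mat n n"
  by (simp add: diag_prefix_def)

lemma mat_unit_mult: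
  assumes "j < n" "k < n"
  shows "mat_unit n i j * mat_unit n k l = (if j = k then mat_unit n i l else 0\<^sub>m n n)"
proof (rule eq_matI)
  fix a b assume "a < dim_row (if j = k then mat_unit n i l else 0\<^sub>m n n :: 'a mat)"
    "b < dim_col (if j = k then mat_unit n i l else 0\<^sub>m n n :: 'a mat)"
  then have ab: "a < n" "b < n" by (simp_all add: mat_unit_def split: if_splits)
  have "(mat_unit n i j * mat_unit n k l) $$ (a, b) =
      (\<Sum>c\<in>{0..<n}. (if a = i \<and> c = j then 1 else 0) * (if c = k \<and> b = l then 1 else (0::'a)))"
    using ab by (simp add: mat_unit_def scalar_prod_def)
  also have "\<dots> = (if a = i \<and> j = k \<and> b = l then 1 else 0)"
    using assms by (simp add: if_distrib[of "\<lambda>x. x * _"] sum.delta' cong: if_cong)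
  finally show "(mat_unit n i j * mat_unit n k l) $$ (a, b) =
      (if j = k then mat_unit n i l else 0\<^sub>m n n :: 'a mat) $$ (a, b)"
    using ab by (simp add: mat_unit_def)
qed (auto simp: mat_unit_def)

lemma diag_prefix_0: "diag_prefix n 0 = 0\<^sub>m n n"
  by (rule eq_matI) (auto simp: diag_prefix_def)

lemma diag_prefix_n: "diag_prefix n n = 1\<^sub>m n"
  by (rule eq_matI) (auto simp: diag_prefix_def)

lemma diag_prefix_Suc: "diag_prefix n (Suc k) = diag_prefix n k + mat_unit n k k"
  by (rule eq_matI) (auto simp: diag_prefix_def mat_unit_def)

context tensor_words
begin

definition local_kernels :: "(('i \<Rightarrow> nat) \<Rightarrow> ('i \<Rightarrow> nat) \<Rightarrow> 'a::comm_ring_1) set" where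
  "local_kernels = {a. \<exists>J. local_kernel J a}"

lemma local_kernels_common:
  fixes A :: "(('i \<Rightarrow> nat) \<Rightarrow> ('i \<Rightarrow> nat) \<Rightarrow> 'a::comm_ring_1) set"
  assumes "finite A" "A \<subseteq> local_kernels"
  shows "\<exists>J. finite J \<and> (\<forall>a\<in>A. local_kernel J a)"
proof -
  define L where "L a = (SOME J. local_kernel J a)" for a :: "('i \<Rightarrow> nat) \<Rightarrow> ('i \<Rightarrow> nat) \<Rightarrow> 'a"
  have L: "local_kernel (L a) a" if "a \<in> A" for a
  proof -
    have "\<exists>J. local_kernel J a" using assms(2) that by (auto simp: local_kernels_def)
    then show ?thesis unfolding L_def by (rule someI_ex)
  qed
  let ?J = "\<Union>a\<in>A. L a"
  have "finite ?J" using assms(1) L local_kernel_finite by blast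
  moreover have "local_kernel ?J a" if "a \<in> A" for a
    using local_kernel_mono[OF L[OF that] _ \<open>finite ?J\<close>] that by blast
  ultimately show ?thesis by blast
qed

lemma local_kernels_common_pair:
  fixes a b :: "('i \<Rightarrow> nat) \<Rightarrow> ('i \<Rightarrow> nat) \<Rightarrow> 'a::comm_ring_1"
  assumes "a \<in> local_kernels" "b \<in> local_kernels"
  obtains J where "local_kernel J a" "local_kernel J b"
proof -
  have "\<exists>J. finite J \<and> (\<forall>c\<in>{a, b}. local_kernel J c)"
    by (rule local_kernels_common) (use assms in auto)
  then obtain J where "\<forall>c\<in>{a, b}. local_kernel J c" by blast
  then have "local_kernel J a" "local_kernel J b" by simp_all
  then show ?thesis by (rule that)
qed

lemma kapply_supported_on_fibre:
  assumes a: "local_kernel J a" and g: "g \<in> supported_on (fibre J w)"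
  shows "kapply a g \<in> supported_on (fibre J w)"
  unfolding supported_on_def mem_Collect_eq
proof (intro allI impI)
  fix x assume x: "x \<notin> fibre J w"
  have "a x v * g v = 0" if "a x v \<noteq> 0" for v
  proof -
    have "x \<in> words" "agree_off J x v" using local_kernel_support[OF a that] by auto
    moreover have "agree_off J w x" if "agree_off J w v" "agree_off J x v"
      using agree_off_trans[OF that(1) agree_off_sym[OF that(2)]] .
    ultimately have "v \<notin> fibre J w"
      using x by (auto simp: fibre_def)
    then show ?thesis using g by (simp add: supported_on_def)
  qed
  then show "kapply a g x = 0"
    by (simp add: kapply_def)
qed

end

text \<open>A unital homomorphism \<open>\<chi>\<close> from \<open>M\<^bsub>n\<^esub>(F)\<close> into the local kernels: the images of the
  matrix units are local on one finite \<open>J\<close>, so they make the functions supported on the fibre of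
  the zero word, a set with \<open>card (local_words J)\<close> elements, into an \<open>M\<^bsub>n\<^esub>(F)\<close>-module.\<close>

locale local_kernel_rep = tensor_words d for d :: "'i \<Rightarrow> nat" +
  fixes n :: nat and chi :: "'a::field mat \<Rightarrow> ('i \<Rightarrow> nat) \<Rightarrow> ('i \<Rightarrow> nat) \<Rightarrow> 'a"
  assumes n_pos: "0 < n"
    and chi_in: "\<And>M. M \<in> carrier_mat n n \<Longrightarrow> chi M \<in> local_kernels"
    and chi_add: "\<And>M N. M \<in> carrier_mat n n \<Longrightarrow> N \<in> carrier_mat n n \<Longrightarrow> chi (M + N) = chi M + chi N"
    and chi_mult: "\<And>M N. M \<in> carrier_mat n n \<Longrightarrow> N \<in> carrier_mat n n \<Longrightarrow> chi (M * N) = kmult (chi M) (chi N)"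
    and chi_one: "chi (1\<^sub>m n) = kone"
begin

lemma chi_zero: "chi (0\<^sub>m n n) = 0"
proof -
  have "chi (0\<^sub>m n n) = chi (0\<^sub>m n n) + chi (0\<^sub>m n n)"
    using chi_add[of "0\<^sub>m n n" "0\<^sub>m n n"] by simp
  then show ?thesis
    by (metis add_cancel_right_right)
qed

lemma kapply_chi_diag_prefix:
  "k \<le> n \<Longrightarrow> kapply (chi (diag_prefix n k)) g = (\<Sum>i<k. kapply (chi (mat_unit n i i)) g)"
proof (induction k)
  case 0
  show ?case by (simp add: diag_prefix_0 chi_zero kapply_def fun_eq_iff)
next
  case (Suc k)
  obtain L where L: "local_kernel L (chi (diag_prefix n k))" "local_kernel L (chi (mat_unit n k k))"
    using chi_in[OF diag_prefix_carrier] chi_in[OF mat_unit_carrier] by (rule local_kernels_common_pair)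
  have "kapply (chi (diag_prefix n (Suc k))) g =
      kapply (chi (diag_prefix n k)) g + kapply (chi (mat_unit n k k)) g"
    by (simp add: diag_prefix_Suc chi_add kapply_add_kernel[OF L])
  then show ?case
    using Suc by simp
qed

lemma mat_units_local: "\<exists>J. finite J \<and> (\<forall>i<n. \<forall>j<n. local_kernel J (chi (mat_unit n i j)))"
proof -
  let ?units = "(\<lambda>(i, j). chi (mat_unit n i j)) ` ({..<n} \<times> {..<n})"
  have "\<exists>J. finite J \<and> (\<forall>a\<in>?units. local_kernel J a)"
    by (rule local_kernels_common) (use chi_in in auto)
  then obtain J where "finite J" "\<And>a. a \<in> ?units \<Longrightarrow> local_kernel J a"
    by blast
  moreover have "chi (mat_unit n i j) \<in> ?units" if "i < n" "j < n" for i j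
    using that by (intro rev_image_eqI[of "(i, j)"]) auto
  ultimately show ?thesis
    by blast
qed

lemma matrix_unit_action_fibre:
  assumes J: "finite J" and loc: "\<And>i j. i < n \<Longrightarrow> j < n \<Longrightarrow> local_kernel J (chi (mat_unit n i j))"
  shows "matrix_unit_action n (fibre J (\<lambda>_. 0)) (\<lambda>i j. kapply (chi (mat_unit n i j)))"
proof
  let ?E = "\<lambda>i j. kapply (chi (mat_unit n i j))" and ?X = "fibre J (\<lambda>_. 0)"
  show "finite ?X" by (rule finite_fibre[OF J])
  show "\<And>i j g h. ?E i j (g + h) = ?E i j g + ?E i j h" by (rule kapply_add)
  show "\<And>i j c g. ?E i j (fun_scale c g) = fun_scale c (?E i j g)" by (rule kapply_scale)
  show "\<And>i j g. i < n \<Longrightarrow> j < n \<Longrightarrow> g \<in> supported_on ?X \<Longrightarrow> ?E i j g \<in> supported_on ?X"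
    using kapply_supported_on_fibre loc by blast
  show "?E i j (?E k l g) = (if j = k then ?E i l g else 0)" if "i < n" "j < n" "k < n" "l < n" for i j k l g
    using that by (simp add: kapply_kmult[OF loc loc, symmetric] chi_mult[symmetric] mat_unit_mult chi_zero
        kapply_zero_kernel)
  show "(\<Sum>i<n. ?E i i g) = g" if "g \<in> supported_on ?X" for g
    using that kapply_chi_diag_prefix[of n g, symmetric] zero_in_words
    by (auto simp: diag_prefix_n chi_one kapply_one fun_eq_iff supported_on_def fibre_def)
qed (rule n_pos)

lemma dvd_card_local_words:
  obtains J where "finite J" "n dvd card (local_words J)"
proof -
  obtain J where J: "finite J" "\<And>i j. i < n \<Longrightarrow> j < n \<Longrightarrow> local_kernel J (chi (mat_unit n i j))"
    using mat_units_local by blast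
  have "n dvd card (fibre J (\<lambda>_. 0))"
    using matrix_unit_action.dvd_card[OF matrix_unit_action_fibre[OF J]] .
  then show ?thesis
    using that J(1) card_fibre[OF J(1) zero_in_words] by simp
qed

end

text \<open>The algebra is transported to the coordinate space \<open>fin_supp\<close> on the index type along a
  bijection between the indices and the basis labels; this is where \<open>dim A = |'i|\<close> comes from.\<close>

locale tensor_algebra = tensor_words d for d :: "'i \<Rightarrow> nat" +
  fixes label_of :: "'i \<Rightarrow> ('i \<Rightarrow> nat \<times> nat)"
  assumes bij_label_of: "bij_betw label_of UNIV labels"
begin

definition relabel :: "('i \<Rightarrow> 'a::field) \<Rightarrow> ('i \<Rightarrow> nat \<times> nat) \<Rightarrow> 'a" where
  "relabel g u = (if u \<in> labels then g (inv_into UNIV label_of u) else 0)"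

definition kernel_of :: "('i \<Rightarrow> 'a::field) \<Rightarrow> ('i \<Rightarrow> nat) \<Rightarrow> ('i \<Rightarrow> nat) \<Rightarrow> 'a" where
  "kernel_of g = basis_comb (relabel g)"

definition tensor_mult :: "('i \<Rightarrow> 'a::field) \<Rightarrow> ('i \<Rightarrow> 'a) \<Rightarrow> ('i \<Rightarrow> 'a)" where
  "tensor_mult f g = inv_into fin_supp kernel_of (kmult (kernel_of f) (kernel_of g))"

definition tensor_one :: "'i \<Rightarrow> 'a::field" where
  "tensor_one = inv_into fin_supp kernel_of kone"

lemma label_of_in_labels: "label_of x \<in> labels"
  using bij_label_of by (auto simp: bij_betw_def)

lemma inv_label_of: "inv_into UNIV label_of (label_of x) = x"
  using bij_label_of by (simp add: bij_betw_def inv_into_f_f)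

lemma label_of_inv: "u \<in> labels \<Longrightarrow> label_of (inv_into UNIV label_of u) = u"
  using bij_label_of by (metis bij_betw_inv_into_right)

lemma relabel_label_of: "relabel g (label_of x) = g x"
  by (simp add: relabel_def label_of_in_labels inv_label_of)

lemma relabel_in_coordinates:
  assumes g: "g \<in> fin_supp"
  shows "relabel g \<in> coordinates"
proof -
  have "{u. relabel g u \<noteq> 0} \<subseteq> label_of ` {x. g x \<noteq> 0}"
  proof
    fix u assume "u \<in> {u. relabel g u \<noteq> 0}"
    then have u: "u \<in> labels" "g (inv_into UNIV label_of u) \<noteq> 0"
      by (auto simp: relabel_def split: if_splits)
    show "u \<in> label_of ` {x. g x \<noteq> 0}"
      by (rule image_eqI[where x = "inv_into UNIV label_of u"]) (simp_all add: u label_of_inv)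
  qed
  moreover have "finite (label_of ` {x. g x \<noteq> 0})"
    using g by (simp add: fin_supp_def)
  moreover have "{u. relabel g u \<noteq> 0} \<subseteq> labels"
    by (auto simp: relabel_def split: if_splits)
  ultimately show ?thesis
    unfolding coordinates_def using finite_subset by blast
qed

lemma relabel_add: "relabel (\<lambda>x. f x + g x) = relabel f + relabel g"
  by (simp add: fun_eq_iff relabel_def)

lemma relabel_scale: "relabel (\<lambda>x. c * g x) = (\<lambda>u. c * relabel g u)"
  by (simp add: fun_eq_iff relabel_def)

lemma kernel_of_add:
  "f \<in> fin_supp \<Longrightarrow> g \<in> fin_supp \<Longrightarrow> kernel_of (\<lambda>x. f x + g x) = kernel_of f + kernel_of g"
  unfolding kernel_of_def relabel_add by (intro basis_comb_add relabel_in_coordinates)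

lemma kernel_of_scale: "g \<in> fin_supp \<Longrightarrow> kernel_of (\<lambda>x. c * g x) = kscale c (kernel_of g)"
  unfolding kernel_of_def relabel_scale by (intro basis_comb_scale relabel_in_coordinates)

lemma local_kernel_kernel_of:
  "g \<in> fin_supp \<Longrightarrow> local_kernel (coordinate_sites (relabel g)) (kernel_of g)"
  unfolding kernel_of_def
  by (intro local_kernel_basis_comb relabel_in_coordinates finite_coordinate_sites subset_refl)

lemma bij_betw_kernel_of: "bij_betw (kernel_of :: ('i \<Rightarrow> 'a::field) \<Rightarrow> _) fin_supp local_kernels"
proof (rule bij_betw_imageI)
  show "inj_on (kernel_of :: ('i \<Rightarrow> 'a) \<Rightarrow> _) fin_supp"
  proof (rule inj_onI)
    fix f g :: "'i \<Rightarrow> 'a" assume f: "f \<in> fin_supp" and g: "g \<in> fin_supp" and eq: "kernel_of f = kernel_of g"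
    have "relabel f = relabel g"
      using inj_on_basis_comb eq relabel_in_coordinates[OF f] relabel_in_coordinates[OF g]
      by (auto simp: kernel_of_def inj_on_def)
    then show "f = g"
      by (metis relabel_label_of ext)
  qed
  show "(kernel_of :: ('i \<Rightarrow> 'a) \<Rightarrow> _) ` fin_supp = local_kernels"
  proof (intro equalityI subsetI)
    fix a assume "a \<in> kernel_of ` fin_supp"
    then show "a \<in> local_kernels"
      using local_kernel_kernel_of by (auto simp: local_kernels_def)
  next
    fix a :: "_ \<Rightarrow> _ \<Rightarrow> 'a" assume "a \<in> local_kernels"
    then obtain J where "local_kernel J a" by (auto simp: local_kernels_def)
    then obtain f where f: "f \<in> coordinates" "basis_comb f = a"
      by (rule basis_comb_surj)
    define g where "g x = f (label_of x)" for x
    have "relabel g = f"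
      using coordinatesD(2)[OF f(1)] by (auto simp: fun_eq_iff relabel_def g_def label_of_inv)
    moreover have "g \<in> fin_supp"
    proof -
      have "{x. g x \<noteq> 0} = label_of -` {u. f u \<noteq> 0}" by (auto simp: g_def)
      moreover have "finite (label_of -` {u. f u \<noteq> 0})"
        using bij_label_of by (intro finite_vimageI coordinatesD(1)[OF f(1)]) (simp add: bij_betw_def)
      ultimately show ?thesis
        by (simp add: fin_supp_def)
    qed
    ultimately show "a \<in> kernel_of ` fin_supp"
      using f(2) by (auto simp: kernel_of_def)
  qed
qed

lemma algebra_transport_kernel_of:
  "algebra_transport kernel_of local_kernels (+) kscale kmult (kone :: _ \<Rightarrow> _ \<Rightarrow> 'a::field)"
proof
  have common: "\<exists>J. local_kernel J a \<and> local_kernel J b \<and> local_kernel J c"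
    if "a \<in> local_kernels" "b \<in> local_kernels" "c \<in> local_kernels" for a b c :: "_ \<Rightarrow> _ \<Rightarrow> 'a"
  proof -
    have "\<exists>J. finite J \<and> (\<forall>x\<in>{a, b, c}. local_kernel J x)"
      by (rule local_kernels_common) (use that in auto)
    then show ?thesis by auto
  qed
  show "bij_betw kernel_of fin_supp (local_kernels :: (_ \<Rightarrow> _ \<Rightarrow> 'a) set)"
    by (rule bij_betw_kernel_of)
  show "kernel_of (\<lambda>x. f x + g x) = kernel_of f + kernel_of g" if "f \<in> fin_supp" "g \<in> fin_supp"
    for f g :: "'i \<Rightarrow> 'a"
    using that by (rule kernel_of_add)
  show "kernel_of (\<lambda>x. c * f x) = kscale c (kernel_of f)" if "f \<in> fin_supp" for c and f :: "'i \<Rightarrow> 'a"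
    using that by (rule kernel_of_scale)
  show "kmult a b \<in> local_kernels" if "a \<in> local_kernels" "b \<in> local_kernels" for a b :: "_ \<Rightarrow> _ \<Rightarrow> 'a"
    using that unfolding local_kernels_def by (blast intro: local_kernel_kmult)
  show "(kone :: _ \<Rightarrow> _ \<Rightarrow> 'a) \<in> local_kernels"
    using local_kernel_one by (auto simp: local_kernels_def)
  show "kmult (a + b) c = kmult a c + kmult b c"
    if "a \<in> local_kernels" "b \<in> local_kernels" "c \<in> local_kernels" for a b c :: "_ \<Rightarrow> _ \<Rightarrow> 'a"
    using common[OF that] kmult_add_left by blast
  show "kmult a (b + c) = kmult a b + kmult a c"
    if "a \<in> local_kernels" "b \<in> local_kernels" "c \<in> local_kernels" for a b c :: "_ \<Rightarrow> _ \<Rightarrow> 'a"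
    using common[OF that] kmult_add_right by blast
  show "kmult (kmult a b) c = kmult a (kmult b c)"
    if "a \<in> local_kernels" "b \<in> local_kernels" "c \<in> local_kernels" for a b c :: "_ \<Rightarrow> _ \<Rightarrow> 'a"
    using common[OF that] kmult_assoc by blast
  show "kmult (kscale k a) b = kscale k (kmult a b)" if "a \<in> local_kernels" "b \<in> local_kernels"
    for k and a b :: "_ \<Rightarrow> _ \<Rightarrow> 'a"
    using that unfolding local_kernels_def by (blast intro: kmult_scale_left)
  show "kmult a (kscale k b) = kscale k (kmult a b)" if "a \<in> local_kernels" "b \<in> local_kernels"
    for k and a b :: "_ \<Rightarrow> _ \<Rightarrow> 'a"
    using that unfolding local_kernels_def by (blast intro: kmult_scale_right)
  show "kmult kone a = a" if "a \<in> local_kernels" for a :: "_ \<Rightarrow> _ \<Rightarrow> 'a"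
    using that unfolding local_kernels_def by (blast intro: kmult_one_left)
  show "kmult a kone = a" if "a \<in> local_kernels" for a :: "_ \<Rightarrow> _ \<Rightarrow> 'a"
    using that unfolding local_kernels_def by (blast intro: kmult_one_right)
qed

lemma pulled_mult_eq: "algebra_transport.pulled_mult kernel_of kmult = (tensor_mult :: _ \<Rightarrow> _ \<Rightarrow> 'i \<Rightarrow> 'a::field)"
  by (simp add: fun_eq_iff algebra_transport.pulled_mult_def[OF algebra_transport_kernel_of]
      algebra_transport.pull_def[OF algebra_transport_kernel_of] tensor_mult_def)

lemma pulled_one_eq: "algebra_transport.pulled_one kernel_of kone = (tensor_one :: 'i \<Rightarrow> 'a::field)"
  by (simp add: algebra_transport.pulled_one_def[OF algebra_transport_kernel_of]
      algebra_transport.pull_def[OF algebra_transport_kernel_of] tensor_one_def)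

lemma unital_algebra_tensor: "unital_algebra tensor_mult (tensor_one :: 'i \<Rightarrow> 'a::field)"
  using algebra_transport.unital_algebra_pulled[OF algebra_transport_kernel_of]
  unfolding pulled_mult_eq pulled_one_eq .

lemma matrix_embedding_matrix_kernel:
  assumes J: "finite J"
  shows "matrix_embedding tensor_mult (tensor_one :: 'i \<Rightarrow> 'a::field) (card (local_words J))
    (\<lambda>M. inv_into fin_supp kernel_of (matrix_kernel J M))"
proof -
  have "matrix_embedding (algebra_transport.pulled_mult kernel_of kmult)
      (algebra_transport.pulled_one kernel_of kone) (card (local_words J))
      (\<lambda>M. algebra_transport.pull kernel_of (matrix_kernel J M :: _ \<Rightarrow> _ \<Rightarrow> 'a))"
    using local_kernel_matrix_kernel[OF J]
    by (intro algebra_transport.matrix_embedding_pullI[OF algebra_transport_kernel_of]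
        inj_on_matrix_kernel[OF J] matrix_kernel_add[OF J] matrix_kernel_mult[OF J]
        matrix_kernel_smult[OF J] matrix_kernel_one[OF J]) (auto simp: local_kernels_def)
  then show ?thesis
    unfolding pulled_mult_eq pulled_one_eq algebra_transport.pull_def[OF algebra_transport_kernel_of] .
qed

lemma card_local_words_in_degrees:
  "finite J \<Longrightarrow> card (local_words J) \<in> matrix_degrees tensor_mult (tensor_one :: 'i \<Rightarrow> 'a::field)"
  using matrix_embedding_matrix_kernel card_local_words_pos by (auto simp: matrix_degrees_def)

lemma locally_matrix_tensor: "locally_matrix tensor_mult (tensor_one :: 'i \<Rightarrow> 'a::field)"
  unfolding locally_matrix_def
proof (intro allI impI)
  fix S :: "('i \<Rightarrow> 'a) set" assume S: "finite S \<and> S \<subseteq> fin_supp"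
  let ?J = "\<Union>g\<in>S. coordinate_sites (relabel g)"
  let ?emb = "\<lambda>M. inv_into fin_supp kernel_of (matrix_kernel ?J M)"
  have J: "finite ?J"
    using S finite_coordinate_sites relabel_in_coordinates by blast
  have "g \<in> ?emb ` carrier_mat (card (local_words ?J)) (card (local_words ?J))" if g: "g \<in> S" for g
  proof -
    have gS: "g \<in> fin_supp" using g S by blast
    have "local_kernel ?J (kernel_of g)"
      using local_kernel_mono[OF local_kernel_kernel_of[OF gS] _ J] g by blast
    then obtain M where M: "M \<in> carrier_mat (card (local_words ?J)) (card (local_words ?J))"
        "matrix_kernel ?J M = kernel_of g"
      by (rule matrix_kernel_surj[OF J])
    have "?emb M = g"
      using M(2) bij_betw_inv_into_left[OF bij_betw_kernel_of gS] by simp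
    then show ?thesis using M(1) by blast
  qed
  then show "\<exists>n \<phi>. 0 < n \<and> matrix_embedding tensor_mult tensor_one n \<phi> \<and> S \<subseteq> \<phi> ` carrier_mat n n"
    using matrix_embedding_matrix_kernel[OF J] card_local_words_pos[OF J] by blast
qed

lemma matrix_degree_dvd:
  assumes "n \<in> matrix_degrees tensor_mult (tensor_one :: 'i \<Rightarrow> 'a::field)"
  obtains J where "finite J" "n dvd card (local_words J)"
proof -
  from assms obtain phi where n: "0 < n"
    and emb: "matrix_embedding tensor_mult (tensor_one :: 'i \<Rightarrow> 'a) n phi"
    by (auto simp: matrix_degrees_def)
  note pushD = algebra_transport.matrix_embedding_pushD[OF algebra_transport_kernel_of,
      unfolded pulled_mult_eq pulled_one_eq, OF emb]
  interpret local_kernel_rep d n "\<lambda>M. kernel_of (phi M)"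
    by unfold_locales (use n pushD in auto)
  show ?thesis
    using dvd_card_local_words that by blast
qed

end

section \<open>Steinitz numbers\<close>

definition fibre_count :: "('i \<Rightarrow> nat) \<Rightarrow> nat \<Rightarrow> enat" where
  "fibre_count d p = (if finite {i. d i = p} then enat (card {i. d i = p}) else \<infinity>)"

lemma multiplicity_prod_primes:
  assumes J: "finite J" and p: "prime p" and d: "\<And>i. prime (d i)"
  shows "multiplicity p (\<Prod>i\<in>J. d i) = card {i\<in>J. d i = p}"
proof -
  have "0 \<notin> d ` J"
    using d by (metis imageE not_prime_0)
  then have "multiplicity p (\<Prod>i\<in>J. d i) = (\<Sum>i\<in>J. multiplicity p (d i))"
    using J p by (intro prime_elem_multiplicity_prod_distrib) simp_all
  also have "\<dots> = (\<Sum>i\<in>J. if d i = p then 1 else 0)"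
  proof (rule sum.cong[OF refl])
    fix i
    show "multiplicity p (d i) = (if d i = p then 1 else 0)"
    proof (cases "d i = p")
      case False
      then have "\<not> p dvd d i" using primes_dvd_imp_eq[OF p d[of i]] by blast
      then show ?thesis using False by (simp add: not_dvd_imp_multiplicity_0)
    qed (use p in \<open>simp add: multiplicity_self prime_gt_0_nat not_prime_unit\<close>)
  qed
  also have "\<dots> = card {i\<in>J. d i = p}"
    using J by (simp add: sum.If_cases Int_def)
  finally show ?thesis .
qed

lemma fibre_count_attained:
  assumes "enat t \<le> fibre_count d p"
  obtains J where "finite J" "card {i\<in>J. d i = p} = t"
proof -
  have "t \<le> card {i. d i = p} \<or> infinite {i. d i = p}"
    using assms by (auto simp: fibre_count_def split: if_splits)
  then obtain J where "J \<subseteq> {i. d i = p}" "finite J" "card J = t"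
    by (meson obtain_subset_with_card_n infinite_arbitrarily_large)
  moreover from this have "{i\<in>J. d i = p} = J" by blast
  ultimately show ?thesis using that by simp
qed

lemma card_le_fibre_count: "finite J \<Longrightarrow> enat (card {i\<in>J. d i = p}) \<le> fibre_count d p"
  by (auto simp: fibre_count_def intro: card_mono)

lemma enat_le_all_imp_infinity:
  assumes "\<And>t. enat t \<le> x"
  shows "x = \<infinity>"
proof (cases x)
  case (enat s)
  with assms[of "Suc s"] show ?thesis by simp
qed simp

lemma multiplicity_le_fibre_count:
  assumes d: "\<And>i. prime (d i)" and p: "prime p" and J: "finite J" "n dvd (\<Prod>i\<in>J. d i)"
  shows "enat (multiplicity p n) \<le> fibre_count d p"
proof -
  have "(\<Prod>i\<in>J. d i) \<noteq> 0"
    using d by (simp add: prime_gt_0_nat prod_pos)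
  then have "multiplicity p n \<le> multiplicity p (\<Prod>i\<in>J. d i)"
    by (rule dvd_imp_multiplicity_le[OF J(2)])
  also have "\<dots> = card {i\<in>J. d i = p}"
    by (rule multiplicity_prod_primes[OF J(1) p d])
  finally show ?thesis
    using card_le_fibre_count[OF J(1)] order_trans enat_ord_simps(1) by blast
qed

lemma steinitz_lcm_sandwich:
  assumes d: "\<And>i. prime (d i)"
    and prods: "\<And>J. finite J \<Longrightarrow> (\<Prod>i\<in>J. d i) \<in> S"
    and divs: "\<And>n. n \<in> S \<Longrightarrow> \<exists>J. finite J \<and> n dvd (\<Prod>i\<in>J. d i)"
    and p: "prime p"
  shows "steinitz_lcm S p = fibre_count d p"
proof -
  have "enat (multiplicity p n) \<le> fibre_count d p" if n: "n \<in> S" for n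
  proof -
    obtain J where "finite J" "n dvd (\<Prod>i\<in>J. d i)" using divs[OF n] by blast
    then show ?thesis by (rule multiplicity_le_fibre_count[OF d p])
  qed
  then have le: "(SUP n\<in>S. enat (multiplicity p n)) \<le> fibre_count d p"
    by (rule SUP_least)
  have ge: "enat t \<le> (SUP n\<in>S. enat (multiplicity p n))" if t: "enat t \<le> fibre_count d p" for t
  proof -
    obtain J where J: "finite J" "card {i\<in>J. d i = p} = t"
      using fibre_count_attained[OF t] by blast
    have "multiplicity p (\<Prod>i\<in>J. d i) = t"
      using multiplicity_prod_primes[OF J(1) p d] J(2) by simp
    then show ?thesis
      using SUP_upper[OF prods[OF J(1)], of "\<lambda>n. enat (multiplicity p n)"] by simp
  qed
  have "fibre_count d p \<le> (SUP n\<in>S. enat (multiplicity p n))"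
  proof (cases "fibre_count d p")
    case infinity
    then show ?thesis using ge enat_le_all_imp_infinity by simp
  qed (use ge in simp)
  with le p show ?thesis
    by (simp add: steinitz_lcm_def)
qed

text \<open>Realising a Steinitz number with an infinite exponent by a prime-valued labelling of an
  infinite set: enumerate countably many indices by pairs \<open>(p, k)\<close> and label the index of \<open>(p, k)\<close>
  by \<open>p\<close> if \<open>k < \<tau> p\<close>; every other index is labelled by the prime \<open>q\<close> with \<open>\<tau> q = \<infinity>\<close>.\<close>

lemma prime_labelling_exists:
  assumes "infinite (UNIV :: 'i set)" and q: "prime q" "\<tau> q = \<infinity>"
  obtains d :: "'i \<Rightarrow> nat" where "\<And>i. prime (d i)" "\<And>p. prime p \<Longrightarrow> fibre_count d p = \<tau> p"
proof -
  obtain iota :: "nat \<Rightarrow> 'i" where iota: "inj iota"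
    using infinite_countable_subset[OF assms(1)] by blast
  define e where "e p k = iota (prod_encode (p, k))" for p k
  define d where "d i = (if \<exists>p k. prime p \<and> enat k < \<tau> p \<and> i = e p k
    then (THE p. \<exists>k. prime p \<and> enat k < \<tau> p \<and> i = e p k) else q)" for i
  have e_inj: "e p k = e p' k' \<longleftrightarrow> p = p' \<and> k = k'" for p k p' k'
    using iota by (auto simp: e_def inj_eq prod_encode_eq)
  have d_e: "d (e p k) = p" if "prime p" "enat k < \<tau> p" for p k
    using that e_inj unfolding d_def by (auto intro!: the_equality)
  have d_prime: "prime (d i)" for i
  proof (cases "\<exists>p k. prime p \<and> enat k < \<tau> p \<and> i = e p k")
    case True
    then obtain p k where "prime p" "enat k < \<tau> p" "i = e p k" by blast
    then show ?thesis using d_e by simp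
  qed (auto simp: d_def q)
  have fibre: "{i. d i = p} = e p ` {k. enat k < \<tau> p}" if "prime p" "p \<noteq> q" for p
  proof (intro equalityI subsetI)
    fix i assume "i \<in> {i. d i = p}"
    then have "\<exists>p k. prime p \<and> enat k < \<tau> p \<and> i = e p k"
      using that by (auto simp: d_def split: if_splits)
    then obtain p' k where "prime p'" "enat k < \<tau> p'" "i = e p' k" by blast
    with \<open>i \<in> {i. d i = p}\<close> show "i \<in> e p ` {k. enat k < \<tau> p}"
      using d_e by auto
  qed (use d_e that in auto)
  have "fibre_count d p = \<tau> p" if p: "prime p" for p
  proof (cases "\<tau> p")
    case (enat t)
    then have "p \<noteq> q" using q by auto
    moreover have "inj_on (e p) {k. k < t}" using e_inj by (auto simp: inj_on_def)
    ultimately show ?thesis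
      using fibre[OF p] enat by (simp add: fibre_count_def card_image)
  next
    case infinity
    have "e p ` UNIV \<subseteq> {i. d i = p}" using d_e[OF p] infinity by auto
    moreover have "infinite (e p ` UNIV)"
      using e_inj by (auto simp: inj_on_def dest: finite_imageD)
    ultimately show ?thesis
      using infinity by (auto simp: fibre_count_def dest: finite_subset)
  qed
  with d_prime that show ?thesis by blast
qed

lemma (in tensor_algebra) steinitz_char_tensor:
  assumes d: "\<And>i. prime (d i)"
  shows "steinitz_char tensor_mult (tensor_one :: 'i \<Rightarrow> 'a::field) =
    (\<lambda>p. if prime p then fibre_count d p else 0)"
proof
  fix p
  let ?D = "matrix_degrees tensor_mult (tensor_one :: 'i \<Rightarrow> 'a)"
  show "steinitz_char tensor_mult (tensor_one :: 'i \<Rightarrow> 'a) p = (if prime p then fibre_count d p else 0)"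
  proof (cases "prime p")
    case True
    have "steinitz_lcm ?D p = fibre_count d p"
    proof (rule steinitz_lcm_sandwich[OF d _ _ True])
      show "(\<Prod>i\<in>J. d i) \<in> ?D" if "finite J" for J
        using card_local_words_in_degrees[OF that] card_local_words[OF that] by simp
      show "\<exists>J. finite J \<and> n dvd (\<Prod>i\<in>J. d i)" if "n \<in> ?D" for n
        using matrix_degree_dvd[OF that] card_local_words by metis
    qed
    with True show ?thesis
      by (simp add: steinitz_char_def)
  qed (simp add: steinitz_char_def steinitz_lcm_def)
qed

theorem theorem8:
  fixes \<tau> :: "nat \<Rightarrow> enat"
  assumes "steinitz \<tau>"
    and "\<exists>q. prime q \<and> \<tau> q = \<infinity>"
    and "infinite (UNIV :: 'b set)"
  shows "\<exists>(m :: ('b \<Rightarrow> 'a::alg_closed_field) \<Rightarrow> ('b \<Rightarrow> 'a) \<Rightarrow> ('b \<Rightarrow> 'a)) e.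
           unital_algebra m e \<and> locally_matrix m e \<and> steinitz_char m e = \<tau>"
proof -
  obtain q where q: "prime q" "\<tau> q = \<infinity>" using assms(2) by blast
  obtain d :: "'b \<Rightarrow> nat" where d: "\<And>i. prime (d i)" "\<And>p. prime p \<Longrightarrow> fibre_count d p = \<tau> p"
    using prime_labelling_exists[where \<tau> = \<tau>, OF assms(3) q] by blast
  interpret tensor_words d
    using d(1) by unfold_locales (simp add: prime_gt_0_nat)
  have "labels \<approx> (UNIV :: 'b set)"
    using labels_eqpoll_UNIV[OF assms(3)] d(1) prime_ge_2_nat by blast
  then obtain label_of where "bij_betw label_of (UNIV :: 'b set) labels"
    by (meson eqpoll_def eqpoll_sym)
  then interpret tensor_algebra d label_of
    by unfold_locales
  have "steinitz_char tensor_mult (tensor_one :: 'b \<Rightarrow> 'a) p = \<tau> p" for p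
    using assms(1) d(2)[of p] unfolding steinitz_char_tensor[OF d(1)] steinitz_def by auto
  then have "steinitz_char tensor_mult (tensor_one :: 'b \<Rightarrow> 'a) = \<tau>" ..
  then show ?thesis
    using unital_algebra_tensor locally_matrix_tensor by blast
qed

end
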